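(* Let $P\in\mathcal E_0$ be such that $\mathbb E_P[\epsilon_P\xi_P\mid Z]$ is not almost surely equal to $0$. Assume the weight functions $\hat w^{(n)}$ are estimated on a data set $\mathbf A$ independent of $(\mathbf X^{(n)},\mathbf Y^{(n)},\mathbf Z^{(n)})$, that $\hat f,\hat g$ are estimated on an auxiliary data set independent of both $(\mathbf X^{(n)},\mathbf Y^{(n)},\mathbf Z^{(n)})$ and $\mathbf A$, and that there exists $C>0$ with $|\hat w^{(n)}(z)|\le C$ for all $n,z$. Assume $A_fA_g=o_P(n^{-1})$, $B_f=o_P(1)$, $B_g=o_P(1)$, that there exists $\eta>0$ with $\mathbb E_P[|\epsilon_P\xi_P|^{2+\eta}]<\infty$, and that $P$-almost surely there exists $c>0$ with $\inf_n\operatorname{Var}_P(\epsilon_P\xi_P\hat w^{(n)}(Z)\mid\mathbf A)\ge c$. Assume moreover that $\hat w^{(n)}(z)\to w(z)=\operatorname{sign}(\mathbb E_P[\epsilon_P\xi_P\mid Z=z])$ pointwise for almost all $z\in\mathbb R^{d_Z}$ with $\mathbb E_P[\epsilon_P\xi_P\mid Z=z]\ne0$. Then for all $M>0$, $\mathbb P_P(T^{(n)}\ge M)\to1$.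
   Context: Let $X,Y$ be real-valued random variables and $Z$ a random vector in $\mathbb R^{d_Z}$. $\mathcal E_0$ is the set of distributions of $(X,Y,Z)$ absolutely continuous with respect to Lebesgue measure. For $P\in\mathcal E_0$: $f_P(z)=\mathbb E_P[X\mid Z=z]$, $g_P(z)=\mathbb E_P[Y\mid Z=z]$, $\epsilon_P=X-f_P(Z)$, $\xi_P=Y-g_P(Z)$, $u_P(z)=\mathbb E_P[\epsilon_P^2\mid Z=z]$, $v_P(z)=\mathbb E_P[\xi_P^2\mid Z=z]$. Data $(x_i,y_i,z_i)$, $i=1,\dots,n$, i.i.d. copies of $(X,Y,Z)$ form $(\mathbf X^{(n)},\mathbf Y^{(n)},\mathbf Z^{(n)})$; $\hat f,\hat g$ estimate $f_P,g_P$. $A_f=\frac1n\sum_i(f_P(z_i)-\hat f(z_i))^2$, $A_g=\frac1n\sum_i(g_P(z_i)-\hat g(z_i))^2$, $B_f=\frac1n\sum_i(f_P(z_i)-\hat f(z_i))^2v_P(z_i)$, $B_g=\frac1n\sum_i(g_P(z_i)-\hat g(z_i))^2u_P(z_i)$. With $R_i^{(n)}=(x_i-\hat f(z_i))(y_i-\hat g(z_i))\hat w^{(n)}(z_i)$, $T^{(n)}=\frac{\frac1{\sqrt n}\sum_iR_i^{(n)}}{\big(\frac1n\sum_i(R_i^{(n)})^2-(\frac1n\sum_rR_r^{(n)})^2\big)^{1/2}}$. $V_n=o_P(W_n)$ means $\mathbb P_P(|V_n/W_n|>\delta)\to0$ for all $\delta>0$. *)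

theory Defs
  imports "HOL-Probability.Probability"
begin

text \<open>A version g of z \<mapsto> E_P[h | Zf = z]: a Borel function with g(Zf x) equal to the
  conditional expectation of h given the sigma-algebra generated by Zf, P-almost surely.\<close>
definition is_cond_exp_fun ::
  "'a measure \<Rightarrow> ('a \<Rightarrow> 'z::euclidean_space) \<Rightarrow> ('a \<Rightarrow> real) \<Rightarrow> ('z \<Rightarrow> real) \<Rightarrow> bool" where
  "is_cond_exp_fun P Zf h g \<longleftrightarrow> g \<in> borel_measurable borel \<and>
     (AE x in P. g (Zf x) = real_cond_exp P (vimage_algebra (space P) Zf borel) h x)"

text \<open>Same for a nonnegative integrand (no integrability needed), with a real-valued version.\<close>
definition is_nn_cond_exp_fun ::
  "'a measure \<Rightarrow> ('a \<Rightarrow> 'z::euclidean_space) \<Rightarrow> ('a \<Rightarrow> real) \<Rightarrow> ('z \<Rightarrow> real) \<Rightarrow> bool" where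
  "is_nn_cond_exp_fun P Zf h g \<longleftrightarrow> g \<in> borel_measurable borel \<and>
     (AE x in P. 0 \<le> g (Zf x) \<and>
        ennreal (g (Zf x)) = nn_cond_exp P (vimage_algebra (space P) Zf borel) (\<lambda>x. ennreal (h x)) x)"

definition o_P :: "'w measure \<Rightarrow> (nat \<Rightarrow> 'w \<Rightarrow> real) \<Rightarrow> (nat \<Rightarrow> 'w \<Rightarrow> real) \<Rightarrow> bool" where
  "o_P Q V W \<longleftrightarrow>
     (\<forall>\<delta>>0. (\<lambda>n. measure Q {\<omega> \<in> space Q. \<bar>V n \<omega> / W n \<omega>\<bar> > \<delta>}) \<longlonglongrightarrow> 0)"

definition Tstat :: "nat \<Rightarrow> (nat \<Rightarrow> real) \<Rightarrow> real" where
  "Tstat n R = ((1 / sqrt (real n)) * (\<Sum>i<n. R i)) /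
     sqrt ((\<Sum>i<n. (R i)\<^sup>2) / real n - ((\<Sum>r<n. R r) / real n)\<^sup>2)"

end

theory Submission
  imports Defs
begin

(*
  Write R_i = (x_i - fhat(z_i)) (y_i - ghat(z_i)) w(z_i) = (eps_i + dF_i) (xi_i + dG_i) w_i with
  dF = f_P - fhat and dG = g_P - ghat. The leading term w_i eps_i xi_i has conditional mean
  E[w(Z) h(Z)], which tends to E|h(Z)| > 0 by dominated convergence because w tends to sgn h;
  conditionally on the weights, its empirical mean concentrates by Chebyshev's inequality. The
  three remainder terms are small by Cauchy-Schwarz: the mixed ones through a Markov inequality
  conditional on the auxiliary data and on the Z's (which turns eps^2 into u_P(Z), giving B_g),
  the last one through A_f A_g. So with probability tending to one the mean of the R_i is at least
  E|h(Z)|/4 while their second moment stays bounded (Markov), and T = sqrt n mean / sqrt variance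
  exceeds any M. Absolute continuity of P makes ties R_0 = R_1 <> 0 null events, so the
  empirical variance is positive.
*)

section \<open>Independence and limits in probability\<close>

text \<open>Independence of two random elements with different codomains; the library's
  \<^const>\<open>prob_space.indep_var\<close> requires both codomains to be the same type.\<close>

definition indep_pair :: "'w measure \<Rightarrow> 'a measure \<Rightarrow> ('w \<Rightarrow> 'a) \<Rightarrow> 'b measure \<Rightarrow> ('w \<Rightarrow> 'b) \<Rightarrow> bool"
  where "indep_pair M S X T Y \<longleftrightarrow> X \<in> measurable M S \<and> Y \<in> measurable M T \<and>
    distr M (S \<Otimes>\<^sub>M T) (\<lambda>\<omega>. (X \<omega>, Y \<omega>)) = distr M S X \<Otimes>\<^sub>M distr M T Y"

lemma (in prob_space) indep_pairI:
  assumes X[measurable]: "X \<in> measurable M S" and Y[measurable]: "Y \<in> measurable M T"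
    and rect: "\<And>a b. a \<in> sets S \<Longrightarrow> b \<in> sets T \<Longrightarrow>
      prob (X -` a \<inter> Y -` b \<inter> space M) = prob (X -` a \<inter> space M) * prob (Y -` b \<inter> space M)"
  shows "indep_pair M S X T Y"
  unfolding indep_pair_def
proof (intro conjI X Y pair_measure_eqI[symmetric])
  interpret PX: prob_space "distr M S X" by (rule prob_space_distr) simp
  interpret PY: prob_space "distr M T Y" by (rule prob_space_distr) simp
  show "sigma_finite_measure (distr M S X)" "sigma_finite_measure (distr M T Y)"
    by unfold_locales
  fix a b assume "a \<in> sets (distr M S X)" "b \<in> sets (distr M T Y)"
  then have ab: "a \<in> sets S" "b \<in> sets T" by auto
  have "(\<lambda>\<omega>. (X \<omega>, Y \<omega>)) -` (a \<times> b) \<inter> space M = X -` a \<inter> Y -` b \<inter> space M" by auto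
  moreover have "X -` a \<inter> Y -` b \<inter> space M \<in> events" using ab by measurable
  ultimately show "emeasure (distr M S X) a * emeasure (distr M T Y) b =
      emeasure (distr M (S \<Otimes>\<^sub>M T) (\<lambda>\<omega>. (X \<omega>, Y \<omega>))) (a \<times> b)"
    using ab rect[OF ab] by (simp add: emeasure_distr emeasure_eq_measure ennreal_mult'')
qed simp

lemma (in prob_space) nn_integral_indep_pair:
  assumes indep: "indep_pair M S X T Y" and f[measurable]: "f \<in> borel_measurable (S \<Otimes>\<^sub>M T)"
  shows "(\<integral>\<^sup>+\<omega>. f (X \<omega>, Y \<omega>) \<partial>M) = (\<integral>\<^sup>+y. (\<integral>\<^sup>+\<omega>. f (X \<omega>, y) \<partial>M) \<partial>distr M T Y)"
proof -
  have [measurable]: "X \<in> measurable M S" "Y \<in> measurable M T"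
    using indep by (simp_all add: indep_pair_def)
  interpret PX: prob_space "distr M S X" by (rule prob_space_distr) simp
  interpret PY: prob_space "distr M T Y" by (rule prob_space_distr) simp
  interpret PXY: pair_sigma_finite "distr M S X" "distr M T Y" by unfold_locales
  have "(\<integral>\<^sup>+\<omega>. f (X \<omega>, Y \<omega>) \<partial>M) = (\<integral>\<^sup>+p. f p \<partial>distr M (S \<Otimes>\<^sub>M T) (\<lambda>\<omega>. (X \<omega>, Y \<omega>)))"
    by (simp add: nn_integral_distr)
  also have "\<dots> = (\<integral>\<^sup>+p. f p \<partial>(distr M S X \<Otimes>\<^sub>M distr M T Y))"
    using indep by (simp add: indep_pair_def)
  also have "\<dots> = (\<integral>\<^sup>+y. (\<integral>\<^sup>+x. f (x, y) \<partial>distr M S X) \<partial>distr M T Y)"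
    by (simp add: PXY.nn_integral_snd[symmetric])
  also have "\<dots> = (\<integral>\<^sup>+y. (\<integral>\<^sup>+\<omega>. f (X \<omega>, y) \<partial>M) \<partial>distr M T Y)"
    by (intro nn_integral_cong) (simp add: nn_integral_distr)
  finally show ?thesis .
qed

lemma (in prob_space) emeasure_indep_pair_le:
  assumes indep: "indep_pair M S X T Y"
    and [measurable]: "Measurable.pred (S \<Otimes>\<^sub>M T) (\<lambda>p. \<Phi> (fst p) (snd p))"
    and bound: "\<And>y. y \<in> space T \<Longrightarrow> emeasure M {\<omega> \<in> space M. \<Phi> (X \<omega>) y} \<le> c"
  shows "emeasure M {\<omega> \<in> space M. \<Phi> (X \<omega>) (Y \<omega>)} \<le> c"
proof -
  have X[measurable]: "X \<in> measurable M S" and [measurable]: "Y \<in> measurable M T"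
    using indep by (simp_all add: indep_pair_def)
  interpret PY: prob_space "distr M T Y" by (rule prob_space_distr) simp
  have ind: "emeasure M {\<omega> \<in> space M. \<Psi> \<omega>} = (\<integral>\<^sup>+\<omega>. (if \<Psi> \<omega> then 1 else 0) \<partial>M)"
    if [measurable]: "Measurable.pred M \<Psi>" for \<Psi>
  proof -
    have "{\<omega> \<in> space M. \<Psi> \<omega>} \<in> events" by measurable
    then have "emeasure M {\<omega> \<in> space M. \<Psi> \<omega>} = (\<integral>\<^sup>+\<omega>. indicator {\<omega> \<in> space M. \<Psi> \<omega>} \<omega> \<partial>M)"
      by simp
    also have "\<dots> = (\<integral>\<^sup>+\<omega>. (if \<Psi> \<omega> then 1 else 0) \<partial>M)"
      by (intro nn_integral_cong) (simp add: indicator_def)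
    finally show ?thesis .
  qed
  have f: "(\<lambda>p. if \<Phi> (fst p) (snd p) then 1 else 0 :: ennreal) \<in> borel_measurable (S \<Otimes>\<^sub>M T)"
    by measurable
  have "Measurable.pred M (\<lambda>\<omega>. \<Phi> (X \<omega>) (Y \<omega>))"
    using measurable_compose[OF measurable_Pair[of X M S Y T] assms(2)] by simp
  then have "emeasure M {\<omega> \<in> space M. \<Phi> (X \<omega>) (Y \<omega>)} = (\<integral>\<^sup>+\<omega>. (if \<Phi> (X \<omega>) (Y \<omega>) then 1 else 0) \<partial>M)"
    by (rule ind)
  also have "\<dots> = (\<integral>\<^sup>+y. (\<integral>\<^sup>+\<omega>. (if \<Phi> (X \<omega>) y then 1 else 0) \<partial>M) \<partial>distr M T Y)"
    using nn_integral_indep_pair[OF indep f] by simp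
  also have "\<dots> \<le> (\<integral>\<^sup>+y. c \<partial>distr M T Y)"
  proof (intro nn_integral_mono)
    fix y assume "y \<in> space (distr M T Y)"
    then have y: "y \<in> space T"
      by simp
    have "Measurable.pred M (\<lambda>\<omega>. \<Phi> (X \<omega>) y)"
      using measurable_compose[OF measurable_Pair[OF X measurable_const[OF y]] assms(2)] by simp
    then show "(\<integral>\<^sup>+\<omega>. (if \<Phi> (X \<omega>) y then 1 else 0) \<partial>M) \<le> c"
      using bound[OF y] by (simp add: ind[symmetric])
  qed
  finally show ?thesis
    using PY.emeasure_space_1 by simp
qed

lemma (in prob_space) indep_pair_of_indep_sets:
  assumes indep: "indep_sets (\<lambda>k::nat. if k = 0 then sets (vimage_algebra (space M) X S)
      else if k = 1 then sets (vimage_algebra (space M) Y T)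
      else sets (vimage_algebra (space M) W U)) {0, 1, 2}"
    and [measurable]: "X \<in> measurable M S" "Y \<in> measurable M T" "W \<in> measurable M U"
  shows "indep_pair M S X (T \<Otimes>\<^sub>M U) (\<lambda>\<omega>. (Y \<omega>, W \<omega>))"
proof (rule indep_pairI)
  define E where "E = (\<lambda>k::nat. if k = 0 then sets (vimage_algebra (space M) X S)
      else if k = 1 then sets (vimage_algebra (space M) Y T)
      else sets (vimage_algebra (space M) W U))"
  define I where "I = (\<lambda>j::nat. if j = 0 then {0::nat} else {1, 2})"
  have indep01: "indep_sets (\<lambda>j. sigma_sets (space M) (\<Union>i\<in>I j. E i)) {0, 1}"
  proof (rule indep_sets_collect_sigma)
    show "indep_sets E (\<Union>j\<in>{0, 1}. I j)"
      using indep by (simp add: E_def I_def insert_commute)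
  qed (auto simp: E_def I_def disjoint_family_on_def intro!: Int_stableI)
  define N where "N = sigma (space M) (E 1 \<union> E 2)"
  have "E 1 \<union> E 2 \<subseteq> Pow (space M)"
    using sets.sets_into_space by (fastforce simp: E_def)
  then have space_N: "space N = space M" and sets_N: "sets N = sigma_sets (space M) (E 1 \<union> E 2)"
    by (simp_all add: N_def)
  have "Y \<in> measurable N T"
  proof (rule measurableI)
    show "Y \<omega> \<in> space T" if "\<omega> \<in> space N" for \<omega>
      using that measurable_space[of Y M T] by (simp add: space_N)
    show "Y -` A \<inter> space N \<in> sets N" if "A \<in> sets T" for A
      using that by (simp add: space_N sets_N E_def in_vimage_algebra)
  qed
  moreover have "W \<in> measurable N U"
  proof (rule measurableI)
    show "W \<omega> \<in> space U" if "\<omega> \<in> space N" for \<omega>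
      using that measurable_space[of W M U] by (simp add: space_N)
    show "W -` A \<inter> space N \<in> sets N" if "A \<in> sets U" for A
      using that by (simp add: space_N sets_N E_def in_vimage_algebra)
  qed
  ultimately have YW: "(\<lambda>\<omega>. (Y \<omega>, W \<omega>)) \<in> measurable N (T \<Otimes>\<^sub>M U)"
    by (rule measurable_Pair)
  fix a b assume "a \<in> sets S" "b \<in> sets (T \<Otimes>\<^sub>M U)"
  then have "X -` a \<inter> space M \<in> sigma_sets (space M) (\<Union>i\<in>I 0. E i)"
    and "(\<lambda>\<omega>. (Y \<omega>, W \<omega>)) -` b \<inter> space M \<in> sigma_sets (space M) (\<Union>i\<in>I 1. E i)"
    using measurable_sets[OF YW, of b]
    by (simp_all add: I_def E_def space_N sets_N in_vimage_algebra sup_commute)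
  then have "prob (\<Inter>j\<in>{0, 1::nat}. if j = 0 then X -` a \<inter> space M else (\<lambda>\<omega>. (Y \<omega>, W \<omega>)) -` b \<inter> space M)
      = (\<Prod>j\<in>{0, 1::nat}. prob (if j = 0 then X -` a \<inter> space M else (\<lambda>\<omega>. (Y \<omega>, W \<omega>)) -` b \<inter> space M))"
    by (intro indep_setsD[OF indep01]) simp_all
  then show "prob (X -` a \<inter> (\<lambda>\<omega>. (Y \<omega>, W \<omega>)) -` b \<inter> space M)
      = prob (X -` a \<inter> space M) * prob ((\<lambda>\<omega>. (Y \<omega>, W \<omega>)) -` b \<inter> space M)"
    by (simp add: Int_assoc Int_left_commute)
qed measurable

lemma (in prob_space) indep_pair_component_rest:
  fixes X :: "'i \<Rightarrow> 'a \<Rightarrow> 'b"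
  assumes indep: "indep_vars (\<lambda>_. N) X UNIV"
  shows "indep_pair M N (X i) (PiM (UNIV - {i}) (\<lambda>_. N)) (\<lambda>\<omega>. restrict (\<lambda>j. X j \<omega>) (UNIV - {i}))"
proof (rule indep_pairI)
  have [measurable]: "X j \<in> measurable M N" for j
    using indep by (simp add: indep_vars_def)
  show "(\<lambda>\<omega>. restrict (\<lambda>j. X j \<omega>) (UNIV - {i})) \<in> measurable M (PiM (UNIV - {i}) (\<lambda>_. N))"
    by (rule measurable_restrict) simp
  have iv: "indep_var (PiM {i} (\<lambda>_. N)) (\<lambda>\<omega>. restrict (\<lambda>j. X j \<omega>) {i})
      (PiM (UNIV - {i}) (\<lambda>_. N)) (\<lambda>\<omega>. restrict (\<lambda>j. X j \<omega>) (UNIV - {i}))"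
    by (rule indep_var_restrict[OF indep]) auto
  fix a b assume a: "a \<in> sets N" and b: "b \<in> sets (PiM (UNIV - {i}) (\<lambda>_. N))"
  define a' where "a' = (\<lambda>f. f i) -` a \<inter> space (PiM {i} (\<lambda>_. N))"
  have a': "a' \<in> sets (PiM {i} (\<lambda>_. N))"
    unfolding a'_def using a by (intro measurable_sets[OF measurable_component_singleton]) auto
  have "restrict (\<lambda>j. X j \<omega>) {i} \<in> space (PiM {i} (\<lambda>_. N))" if "\<omega> \<in> space M" for \<omega>
    using that measurable_space[of "X i" M N] by (simp add: space_PiM)
  then have "(\<lambda>\<omega>. (restrict (\<lambda>j. X j \<omega>) {i}, restrict (\<lambda>j. X j \<omega>) (UNIV - {i}))) -` (a' \<times> b) \<inter> space M
      = X i -` a \<inter> (\<lambda>\<omega>. restrict (\<lambda>j. X j \<omega>) (UNIV - {i})) -` b \<inter> space M"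
    and "(\<lambda>\<omega>. restrict (\<lambda>j. X j \<omega>) {i}) -` a' \<inter> space M = X i -` a \<inter> space M"
    by (auto simp: a'_def)
  with indep_varD[OF iv a' b]
  show "prob (X i -` a \<inter> (\<lambda>\<omega>. restrict (\<lambda>j. X j \<omega>) (UNIV - {i})) -` b \<inter> space M)
      = prob (X i -` a \<inter> space M) * prob ((\<lambda>\<omega>. restrict (\<lambda>j. X j \<omega>) (UNIV - {i})) -` b \<inter> space M)"
    by simp
qed (use indep in \<open>simp add: indep_vars_def\<close>)

lemma (in prob_space) indep_var_components:
  fixes X :: "'i \<Rightarrow> 'a \<Rightarrow> 'b"
  assumes "indep_vars (\<lambda>_. N) X UNIV" and "i \<noteq> j"
  shows "indep_var N (X i) N (X j)"
proof -
  have "indep_var (PiM {i} (\<lambda>_. N)) (\<lambda>\<omega>. restrict (\<lambda>k. X k \<omega>) {i})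
      (PiM {j} (\<lambda>_. N)) (\<lambda>\<omega>. restrict (\<lambda>k. X k \<omega>) {j})"
    using assms by (intro indep_var_restrict) auto
  then have "indep_var N ((\<lambda>f. f i) \<circ> (\<lambda>\<omega>. restrict (\<lambda>k. X k \<omega>) {i}))
      N ((\<lambda>f. f j) \<circ> (\<lambda>\<omega>. restrict (\<lambda>k. X k \<omega>) {j}))"
    by (rule indep_var_compose) (auto intro: measurable_component_singleton)
  then show ?thesis
    by (simp add: comp_def)
qed

lemma (in prob_space) prob_abs_mean_ge_le:
  fixes V :: "nat \<Rightarrow> 'a \<Rightarrow> real"
  assumes indep: "\<And>i j. i \<noteq> j \<Longrightarrow> indep_var borel (V i) borel (V j)"
    and [measurable]: "\<And>i. random_variable borel (V i)"
    and sq_int: "\<And>i. integrable M (\<lambda>x. (V i x)\<^sup>2)"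
    and mean0: "\<And>i. expectation (V i) = 0"
    and K: "\<And>i. expectation (\<lambda>x. (V i x)\<^sup>2) \<le> K"
    and "n > 0" "r > 0"
  shows "prob {x \<in> space M. r \<le> \<bar>(\<Sum>i<n. V i x) / n\<bar>} \<le> K / (n * r\<^sup>2)"
proof -
  have int: "integrable M (V i)" for i
    by (rule square_integrable_imp_integrable[OF _ sq_int]) simp
  have int_mult: "integrable M (\<lambda>x. V i x * V j x)" for i j
  proof (cases "i = j")
    case True
    then show ?thesis using sq_int[of i] by (simp add: power2_eq_square)
  next
    case False
    then show ?thesis using indep int by (intro indep_var_integrable) auto
  qed
  have expand: "(\<lambda>x. ((\<Sum>i<n. V i x) / n)\<^sup>2) = (\<lambda>x. (\<Sum>i<n. \<Sum>j<n. V i x * V j x) / n\<^sup>2)"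
    by (simp add: power2_eq_square sum_product)
  have cross: "expectation (\<lambda>x. V i x * V j x) = (if i = j then expectation (\<lambda>x. (V i x)\<^sup>2) else 0)"
    for i j
    using indep_var_lebesgue_integral[OF indep int int, of i j] mean0 by (simp add: power2_eq_square)
  have "expectation (\<lambda>x. ((\<Sum>i<n. V i x) / n)\<^sup>2)
      = (\<Sum>i<n. \<Sum>j<n. expectation (\<lambda>x. V i x * V j x)) / n\<^sup>2"
    unfolding expand using int_mult by (simp add: Bochner_Integration.integral_sum)
  also have "\<dots> = (\<Sum>i<n. expectation (\<lambda>x. (V i x)\<^sup>2)) / n\<^sup>2"
    by (intro arg_cong[where f="\<lambda>s. s / _"] sum.cong refl) (simp add: cross)
  also have "\<dots> \<le> (n * K) / n\<^sup>2"
    using sum_bounded_above[of "{..<n}" "\<lambda>i. expectation (\<lambda>x. (V i x)\<^sup>2)" K] K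
    by (simp add: divide_right_mono)
  finally have var: "variance (\<lambda>x. (\<Sum>i<n. V i x) / n) \<le> K / n"
    using \<open>n > 0\<close> int by (simp add: Bochner_Integration.integral_sum mean0 power2_eq_square)
  have "prob {x \<in> space M. r \<le> \<bar>(\<Sum>i<n. V i x) / n - 0\<bar>} \<le> variance (\<lambda>x. (\<Sum>i<n. V i x) / n) / r\<^sup>2"
    using Chebyshev_inequality[of "\<lambda>x. (\<Sum>i<n. V i x) / n" r] \<open>r > 0\<close> int int_mult
    by (simp add: Bochner_Integration.integral_sum mean0 expand power2_eq_square[symmetric])
  also have "\<dots> \<le> K / (n * r\<^sup>2)"
    using var \<open>r > 0\<close> by (simp add: divide_right_mono field_simps)
  finally show ?thesis
    by simp
qed

lemma (in prob_space) prob_less_tendsto_zero: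
  fixes g :: "nat \<Rightarrow> 'a \<Rightarrow> real"
  assumes lim: "AE \<omega> in M. (\<lambda>n. g n \<omega>) \<longlonglongrightarrow> l" and "c < l"
    and [measurable]: "\<And>n. g n \<in> borel_measurable M"
  shows "(\<lambda>n. prob {\<omega> \<in> space M. g n \<omega> < c}) \<longlonglongrightarrow> 0"
proof -
  have "(\<lambda>n. \<integral>\<omega>. indicator {\<omega> \<in> space M. g n \<omega> < c} \<omega> \<partial>M) \<longlonglongrightarrow> (\<integral>\<omega>. (0 :: real) \<partial>M)"
  proof (rule integral_dominated_convergence[where w="\<lambda>_. 1 :: real"])
    show "AE \<omega> in M. (\<lambda>n. indicator {\<omega> \<in> space M. g n \<omega> < c} \<omega> :: real) \<longlonglongrightarrow> 0"
      using lim
    proof eventually_elim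
      case (elim \<omega>)
      have "eventually (\<lambda>n. c < g n \<omega>) sequentially"
        using order_tendstoD(1)[OF elim \<open>c < l\<close>] by simp
      then have "eventually (\<lambda>n. indicator {\<omega> \<in> space M. g n \<omega> < c} \<omega> = (0::real)) sequentially"
        by eventually_elim (auto split: split_indicator)
      then show ?case
        by (rule tendsto_eventually)
    qed
  qed (auto split: split_indicator)
  then show ?thesis
    by simp
qed

lemma measure_tendsto_zeroI:
  assumes "\<And>e. e > 0 \<Longrightarrow> eventually (\<lambda>n. measure M (A n) < e) sequentially"
  shows "(\<lambda>n. measure M (A n)) \<longlonglongrightarrow> 0"
  by (rule order_tendstoI) (auto intro: always_eventually less_le_trans[OF _ measure_nonneg] assms)

lemma (in finite_measure) measure_disj_tendsto_zero:
  assumes [measurable]: "\<And>n. Measurable.pred M (S n)" "\<And>n. Measurable.pred M (T n)"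
    and "(\<lambda>n. measure M {x \<in> space M. S n x}) \<longlonglongrightarrow> 0" "(\<lambda>n. measure M {x \<in> space M. T n x}) \<longlonglongrightarrow> 0"
  shows "(\<lambda>n. measure M {x \<in> space M. S n x \<or> T n x}) \<longlonglongrightarrow> 0"
proof (rule tendsto_sandwich[OF _ _ tendsto_const tendsto_add_zero[OF assms(3,4)]])
  have "{x \<in> space M. S n x \<or> T n x} = {x \<in> space M. S n x} \<union> {x \<in> space M. T n x}" for n
    by auto
  then show "eventually (\<lambda>n. measure M {x \<in> space M. S n x \<or> T n x}
      \<le> measure M {x \<in> space M. S n x} + measure M {x \<in> space M. T n x}) sequentially"
    by (intro always_eventually allI) (simp add: measure_Un_le)
qed simp

section \<open>Conditional expectation functions and null sets\<close>

lemma sigma_finite_subalgebra_vimage_algebra: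
  assumes "finite_measure P" and "Zf \<in> borel_measurable P"
  shows "sigma_finite_subalgebra P (vimage_algebra (space P) Zf borel)"
proof -
  have "finite_measure_subalgebra P (vimage_algebra (space P) Zf borel)"
    unfolding finite_measure_subalgebra_def finite_measure_subalgebra_axioms_def subalgebra_def
    using assms sets_image_in_sets[OF refl assms(2)] by simp
  then show ?thesis
    by (rule finite_measure_subalgebra_is_sigma_finite)
qed

lemma nn_integral_mult_nn_cond_exp_fun:
  fixes Zf :: "'a \<Rightarrow> 'z::euclidean_space" and \<phi> :: "'z \<Rightarrow> ennreal"
  assumes "finite_measure P" and [measurable]: "Zf \<in> borel_measurable P" "h \<in> borel_measurable P"
    and g: "is_nn_cond_exp_fun P Zf h g" and [measurable]: "\<phi> \<in> borel_measurable borel"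
  shows "(\<integral>\<^sup>+x. ennreal (h x) * \<phi> (Zf x) \<partial>P) = (\<integral>\<^sup>+x. ennreal (g (Zf x)) * \<phi> (Zf x) \<partial>P)"
proof -
  interpret sigma_finite_subalgebra P "vimage_algebra (space P) Zf borel"
    by (rule sigma_finite_subalgebra_vimage_algebra[OF assms(1,2)])
  have "(\<lambda>x. \<phi> (Zf x)) \<in> borel_measurable (vimage_algebra (space P) Zf borel)"
    by (intro measurable_compose[OF measurable_vimage_algebra1]) (auto simp: measurable_space)
  then have "(\<integral>\<^sup>+x. \<phi> (Zf x) * ennreal (h x) \<partial>P)
      = (\<integral>\<^sup>+x. \<phi> (Zf x) * nn_cond_exp P (vimage_algebra (space P) Zf borel) (\<lambda>x. ennreal (h x)) x \<partial>P)"
    by (intro nn_cond_exp_intg[symmetric]) simp_all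
  also have "\<dots> = (\<integral>\<^sup>+x. \<phi> (Zf x) * ennreal (g (Zf x)) \<partial>P)"
    using g unfolding is_nn_cond_exp_fun_def by (intro nn_integral_cong_AE) auto
  finally show ?thesis
    by (simp add: mult.commute)
qed

lemma
  fixes Zf :: "'a \<Rightarrow> 'z::euclidean_space"
  assumes "finite_measure P" and [measurable]: "Zf \<in> borel_measurable P"
    and g: "is_cond_exp_fun P Zf h g" and h: "integrable P h"
    and [measurable]: "w \<in> borel_measurable borel" and w: "\<And>z. \<bar>w z\<bar> \<le> C"
  shows integrable_mult_cond_exp_fun: "integrable P (\<lambda>x. w (Zf x) * h x)"
    and integral_mult_cond_exp_fun: "(\<integral>x. w (Zf x) * h x \<partial>P) = (\<integral>x. w (Zf x) * g (Zf x) \<partial>P)"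
proof -
  interpret sigma_finite_subalgebra P "vimage_algebra (space P) Zf borel"
    by (rule sigma_finite_subalgebra_vimage_algebra[OF assms(1,2)])
  have [measurable]: "h \<in> borel_measurable P"
    using h by simp
  have [measurable]: "(\<lambda>x. w (Zf x)) \<in> borel_measurable (vimage_algebra (space P) Zf borel)"
    by (intro measurable_compose[OF measurable_vimage_algebra1]) (auto simp: measurable_space)
  show int: "integrable P (\<lambda>x. w (Zf x) * h x)"
  proof (rule Bochner_Integration.integrable_bound[where f="\<lambda>x. C * h x"])
    show "AE x in P. norm (w (Zf x) * h x) \<le> norm (C * h x)"
      using w by (intro AE_I2) (simp add: abs_mult mult_right_mono abs_le_D1 order_trans[OF _ abs_ge_self])
  qed (use h in simp_all)
  have "(\<integral>x. w (Zf x) * h x \<partial>P)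
      = (\<integral>x. w (Zf x) * real_cond_exp P (vimage_algebra (space P) Zf borel) h x \<partial>P)"
    using int by (intro real_cond_exp_intg(2)[symmetric]) simp_all
  also have "\<dots> = (\<integral>x. w (Zf x) * g (Zf x) \<partial>P)"
    using g unfolding is_cond_exp_fun_def by (intro integral_cong_AE) auto
  finally show "(\<integral>x. w (Zf x) * h x \<partial>P) = (\<integral>x. w (Zf x) * g (Zf x) \<partial>P)" .
qed

lemma integrable_cond_exp_fun:
  fixes Zf :: "'a \<Rightarrow> 'z::euclidean_space"
  assumes "finite_measure P" and [measurable]: "Zf \<in> borel_measurable P"
    and g: "is_cond_exp_fun P Zf h g" and h: "integrable P h"
  shows "integrable P (\<lambda>x. g (Zf x))"
proof -
  interpret sigma_finite_subalgebra P "vimage_algebra (space P) Zf borel"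
    by (rule sigma_finite_subalgebra_vimage_algebra[OF assms(1,2)])
  have [measurable]: "g \<in> borel_measurable borel"
    using g by (simp add: is_cond_exp_fun_def)
  have "integrable P (real_cond_exp P (vimage_algebra (space P) Zf borel) h)"
    using h by (rule real_cond_exp_int)
  then show ?thesis
    using g unfolding is_cond_exp_fun_def by (subst integrable_cong_AE) auto
qed

lemma Times_null_sets_lborel:
  fixes N :: "'b::euclidean_space set"
  assumes "N \<in> null_sets lborel"
  shows "(UNIV :: 'a::euclidean_space set) \<times> N \<in> null_sets lborel"
proof -
  have "emeasure (lborel \<Otimes>\<^sub>M lborel) ((UNIV :: 'a set) \<times> N) = emeasure lborel (UNIV :: 'a set) * emeasure lborel N"
    using assms by (intro lborel.emeasure_pair_measure_Times) auto
  then show ?thesis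
    using assms by (simp add: lborel_prod[symmetric] null_sets_def)
qed

lemma null_sets_lborel_of_sections:
  fixes S :: "(real \<times> 'b::euclidean_space) set"
  assumes "S \<in> sets borel" and sections: "\<And>y. \<exists>a. {x. (x, y) \<in> S} \<subseteq> {a}"
  shows "S \<in> null_sets lborel"
proof -
  have S: "S \<in> sets (lborel \<Otimes>\<^sub>M (lborel :: 'b measure))"
    using assms(1) by (simp only: lborel_prod sets_lborel)
  have "emeasure lborel ((\<lambda>x. (x, y)) -` S) = 0" for y
  proof -
    obtain a where "(\<lambda>x. (x, y)) -` S \<subseteq> {a}"
      using sections[of y] by auto
    then have "emeasure lborel ((\<lambda>x. (x, y)) -` S) \<le> emeasure lborel {a}"
      by (intro emeasure_mono) auto
    then show ?thesis
      by simp
  qed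
  then have "emeasure (lborel \<Otimes>\<^sub>M (lborel :: 'b measure)) S = 0"
    using S by (simp add: lborel_pair.emeasure_pair_measure_alt2)
  then show ?thesis
    using assms(1) by (simp add: lborel_prod null_sets_def)
qed

section \<open>The statistic as a function of the residual products\<close>

lemma abs_mean_le_sqrt_mean_square:
  fixes a :: "nat \<Rightarrow> real"
  assumes "n > 0"
  shows "\<bar>(\<Sum>i<n. a i) / n\<bar> \<le> sqrt ((\<Sum>i<n. (a i)\<^sup>2) / n)"
proof (rule real_le_rsqrt)
  have "(\<Sum>i<n. a i)\<^sup>2 \<le> real n * (\<Sum>i<n. (a i)\<^sup>2)"
    using sum_squared_le_sum_of_squares[of a "{..<n}"] by (simp add: mult.commute)
  then show "\<bar>(\<Sum>i<n. a i) / n\<bar>\<^sup>2 \<le> (\<Sum>i<n. (a i)\<^sup>2) / n"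
    using assms by (simp add: field_simps power2_eq_square)
qed

lemma abs_mean_mult_le:
  fixes w q :: "nat \<Rightarrow> real"
  assumes "n > 0" and w: "\<And>i. \<bar>w i\<bar> \<le> C"
  shows "\<bar>(\<Sum>i<n. w i * q i) / n\<bar> \<le> C * sqrt ((\<Sum>i<n. (q i)\<^sup>2) / n)"
proof -
  have C: "C \<ge> 0" using w[of 0] by linarith
  have "(w i * q i)\<^sup>2 \<le> C\<^sup>2 * (q i)\<^sup>2" for i
    using power_mono[OF w[of i] abs_ge_zero, of 2] by (simp add: power_mult_distrib mult_right_mono)
  then have "(\<Sum>i<n. (w i * q i)\<^sup>2) \<le> C\<^sup>2 * (\<Sum>i<n. (q i)\<^sup>2)"
    by (simp add: sum_distrib_left sum_mono)
  then have "(\<Sum>i<n. (w i * q i)\<^sup>2) / n \<le> C\<^sup>2 * ((\<Sum>i<n. (q i)\<^sup>2) / n)"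
    by (metis divide_right_mono of_nat_0_le_iff times_divide_eq_right)
  then have "sqrt ((\<Sum>i<n. (w i * q i)\<^sup>2) / n) \<le> C * sqrt ((\<Sum>i<n. (q i)\<^sup>2) / n)"
    using C by (metis real_sqrt_le_mono real_sqrt_mult real_sqrt_unique)
  with abs_mean_le_sqrt_mean_square[OF assms(1), of "\<lambda>i. w i * q i"] show ?thesis
    by linarith
qed

lemma square_residual_product_le:
  fixes e x dF dG w :: real
  assumes "\<bar>w\<bar> \<le> C"
  shows "((e + dF) * (x + dG) * w)\<^sup>2 \<le> 4 * C\<^sup>2 * ((e * x)\<^sup>2 + e\<^sup>2 * dG\<^sup>2 + dF\<^sup>2 * x\<^sup>2 + dF\<^sup>2 * dG\<^sup>2)"
proof -
  have sq_add: "(a + b)\<^sup>2 \<le> 2 * (a\<^sup>2 + b\<^sup>2)" for a b :: real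
    using zero_le_power2[of "a - b"] by (simp add: power2_eq_square algebra_simps)
  have "(e + dF)\<^sup>2 * (x + dG)\<^sup>2 \<le> (2 * (e\<^sup>2 + dF\<^sup>2)) * (2 * (x\<^sup>2 + dG\<^sup>2))"
    by (intro mult_mono sq_add) auto
  moreover have "w\<^sup>2 \<le> C\<^sup>2"
    using power_mono[OF assms abs_ge_zero, of 2] by simp
  ultimately have "((e + dF) * (x + dG) * w)\<^sup>2 \<le> (2 * (e\<^sup>2 + dF\<^sup>2)) * (2 * (x\<^sup>2 + dG\<^sup>2)) * C\<^sup>2"
    unfolding power_mult_distrib by (rule mult_mono) auto
  also have "\<dots> = 4 * C\<^sup>2 * ((e * x)\<^sup>2 + e\<^sup>2 * dG\<^sup>2 + dF\<^sup>2 * x\<^sup>2 + dF\<^sup>2 * dG\<^sup>2)"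
    by algebra
  finally show ?thesis .
qed

lemma mean_residual_product_bounds:
  fixes e x dF dG w :: "nat \<Rightarrow> real"
  assumes n: "n > 0" and w: "\<And>i. \<bar>w i\<bar> \<le> C"
    and eG: "(\<Sum>i<n. (e i)\<^sup>2 * (dG i)\<^sup>2) / n \<le> \<tau>"
    and Fx: "(\<Sum>i<n. (dF i)\<^sup>2 * (x i)\<^sup>2) / n \<le> \<tau>"
    and FG: "(\<Sum>i<n. (dF i)\<^sup>2) / n * ((\<Sum>i<n. (dG i)\<^sup>2) / n) * n \<le> \<tau>"
  defines "R \<equiv> \<lambda>i. (e i + dF i) * (x i + dG i) * w i"
  shows "\<bar>(\<Sum>i<n. R i) / n - (\<Sum>i<n. w i * (e i * x i)) / n\<bar> \<le> 3 * C * sqrt \<tau>"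
    and "(\<Sum>i<n. (R i)\<^sup>2) / n \<le> 4 * C\<^sup>2 * ((\<Sum>i<n. (e i * x i)\<^sup>2) / n + 3 * \<tau>)"
proof -
  have "(\<Sum>i<n. (dF i)\<^sup>2 * (dG i)\<^sup>2) \<le> (\<Sum>i<n. \<Sum>j<n. (dF i)\<^sup>2 * (dG j)\<^sup>2)"
    by (intro sum_mono member_le_sum) auto
  also have "\<dots> = (\<Sum>i<n. (dF i)\<^sup>2) / n * ((\<Sum>i<n. (dG i)\<^sup>2) / n) * n * n"
    using n by (simp add: sum_product power2_eq_square)
  finally have FG': "(\<Sum>i<n. (dF i)\<^sup>2 * (dG i)\<^sup>2) / n \<le> \<tau>"
    using n FG by (simp add: divide_le_eq mult_right_mono order_trans)
  have cross: "\<bar>(\<Sum>i<n. w i * (a i * b i)) / n\<bar> \<le> C * sqrt \<tau>"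
    if "(\<Sum>i<n. (a i)\<^sup>2 * (b i)\<^sup>2) / n \<le> \<tau>" for a b :: "nat \<Rightarrow> real"
  proof -
    have "\<bar>(\<Sum>i<n. w i * (a i * b i)) / n\<bar> \<le> C * sqrt ((\<Sum>i<n. (a i * b i)\<^sup>2) / n)"
      by (rule abs_mean_mult_le[OF n w])
    also have "\<dots> \<le> C * sqrt \<tau>"
      using that w[of 0] by (intro mult_left_mono) (auto simp: power_mult_distrib)
    finally show ?thesis .
  qed
  have "(\<Sum>i<n. R i) / n = (\<Sum>i<n. w i * (e i * x i)) / n + (\<Sum>i<n. w i * (e i * dG i)) / n
      + (\<Sum>i<n. w i * (dF i * x i)) / n + (\<Sum>i<n. w i * (dF i * dG i)) / n"
    by (simp add: R_def add_divide_distrib[symmetric] sum.distrib[symmetric] algebra_simps)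
  then show "\<bar>(\<Sum>i<n. R i) / n - (\<Sum>i<n. w i * (e i * x i)) / n\<bar> \<le> 3 * C * sqrt \<tau>"
    using cross[OF eG] cross[OF Fx] cross[OF FG'] by linarith
  have "(\<Sum>i<n. (R i)\<^sup>2) / n \<le> (\<Sum>i<n. 4 * C\<^sup>2 * ((e i * x i)\<^sup>2 + (e i)\<^sup>2 * (dG i)\<^sup>2
      + (dF i)\<^sup>2 * (x i)\<^sup>2 + (dF i)\<^sup>2 * (dG i)\<^sup>2)) / n"
    unfolding R_def by (intro divide_right_mono sum_mono square_residual_product_le w) auto
  also have "\<dots> = 4 * C\<^sup>2 * ((\<Sum>i<n. (e i * x i)\<^sup>2) / n + (\<Sum>i<n. (e i)\<^sup>2 * (dG i)\<^sup>2) / n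
      + (\<Sum>i<n. (dF i)\<^sup>2 * (x i)\<^sup>2) / n + (\<Sum>i<n. (dF i)\<^sup>2 * (dG i)\<^sup>2) / n)"
    by (simp add: sum_distrib_left[symmetric] sum.distrib add_divide_distrib[symmetric])
  also have "\<dots> \<le> 4 * C\<^sup>2 * ((\<Sum>i<n. (e i * x i)\<^sup>2) / n + 3 * \<tau>)"
    using eG Fx FG' by (intro mult_left_mono) auto
  finally show "(\<Sum>i<n. (R i)\<^sup>2) / n \<le> 4 * C\<^sup>2 * ((\<Sum>i<n. (e i * x i)\<^sup>2) / n + 3 * \<tau>)" .
qed

lemma empirical_variance_eq:
  fixes R :: "nat \<Rightarrow> real"
  assumes "n > 0"
  defines "m \<equiv> (\<Sum>i<n. R i) / n"
  shows "(\<Sum>i<n. (R i)\<^sup>2) / n - m\<^sup>2 = (\<Sum>i<n. (R i - m)\<^sup>2) / n"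
proof -
  have "(\<Sum>i<n. (R i - m)\<^sup>2) = (\<Sum>i<n. (R i)\<^sup>2) - 2 * m * (\<Sum>i<n. R i) + n * m\<^sup>2"
    by (simp add: power2_diff sum.distrib sum_subtractf sum_distrib_left algebra_simps)
  also have "(\<Sum>i<n. R i) = n * m"
    using assms by simp
  finally show ?thesis
    using assms(1) by (simp add: field_simps power2_eq_square)
qed

text \<open>The hypothesis \<open>no_tie\<close> rules out a vanishing empirical variance, for which
  \<^const>\<open>Tstat\<close> would be \<open>0\<close> because \<open>x / 0 = 0\<close>.\<close>

lemma Tstat_ge:
  fixes R :: "nat \<Rightarrow> real"
  assumes n: "2 \<le> n" and \<mu>: "0 < \<mu>" "\<mu> \<le> (\<Sum>i<n. R i) / n"
    and S: "(\<Sum>i<n. (R i)\<^sup>2) / n \<le> S" and no_tie: "R 0 = R 1 \<Longrightarrow> R 0 = 0"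
  shows "sqrt n * \<mu> / sqrt S \<le> Tstat n R"
proof -
  define m where "m = (\<Sum>i<n. R i) / n"
  define V where "V = (\<Sum>i<n. (R i)\<^sup>2) / n - m\<^sup>2"
  have V: "V = (\<Sum>i<n. (R i - m)\<^sup>2) / n"
    unfolding V_def m_def using n by (intro empirical_variance_eq) simp
  have "V > 0"
  proof (rule ccontr)
    assume "\<not> V > 0"
    then have "(\<Sum>i<n. (R i - m)\<^sup>2) / n \<le> 0"
      by (simp add: V)
    moreover have "(\<Sum>i<n. (R i - m)\<^sup>2) \<ge> 0"
      by (simp add: sum_nonneg)
    ultimately have "(\<Sum>i<n. (R i - m)\<^sup>2) = 0"
      using n by (simp add: divide_le_0_iff)
    then have "\<forall>i<n. R i = m"
      by (simp add: sum_nonneg_eq_0_iff)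
    then have "R 0 = m" "R 1 = m"
      using n by auto
    then have "m = 0"
      using no_tie by metis
    with \<mu> show False
      unfolding m_def by linarith
  qed
  moreover have "V \<le> S"
    using S zero_le_power2[of m] unfolding V_def by linarith
  moreover have "\<mu> \<le> m"
    using \<mu> by (simp add: m_def)
  then have "0 \<le> sqrt n * m" "sqrt n * \<mu> \<le> sqrt n * m"
    using \<mu>(1) by (auto intro!: mult_left_mono)
  ultimately have "sqrt n * \<mu> / sqrt S \<le> sqrt n * m / sqrt V"
    by (intro frac_le) simp_all
  also have "sqrt n * m / sqrt V = Tstat n R"
  proof -
    have eq: "1 / sqrt n * (\<Sum>i<n. R i) = sqrt n * m"
      unfolding m_def by (smt (verit, best) divide_eq_eq mult.commute mult_cancel_right1
          of_nat_less_0_iff real_div_sqrt times_divide_eq_right)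
    show ?thesis
      unfolding Tstat_def V_def m_def[symmetric] eq ..
  qed
  finally show ?thesis .
qed

lemma Tstat_residual_product_ge:
  fixes e x dF dG w :: "nat \<Rightarrow> real"
  defines "R \<equiv> \<lambda>i. (e i + dF i) * (x i + dG i) * w i"
  assumes n: "2 \<le> n" and w: "\<And>i. \<bar>w i\<bar> \<le> C"
    and \<mu>: "0 < \<mu>" "2 * \<mu> \<le> (\<Sum>i<n. w i * (e i * x i)) / n" and \<tau>: "3 * C * sqrt \<tau> \<le> \<mu>"
    and eG: "(\<Sum>i<n. (e i)\<^sup>2 * (dG i)\<^sup>2) / n \<le> \<tau>" and xF: "(\<Sum>i<n. (x i)\<^sup>2 * (dF i)\<^sup>2) / n \<le> \<tau>"
    and FG: "(\<Sum>i<n. (dF i)\<^sup>2) / n * ((\<Sum>i<n. (dG i)\<^sup>2) / n) * n \<le> \<tau>"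
    and K: "(\<Sum>i<n. (e i * x i)\<^sup>2) / n \<le> K"
    and no_tie: "R 0 = R 1 \<Longrightarrow> R 0 = 0"
  shows "sqrt n * \<mu> / sqrt (4 * C\<^sup>2 * (K + 3 * \<tau>)) \<le> Tstat n R"
proof (rule Tstat_ge[OF n \<mu>(1)])
  have "n > 0"
    using n by simp
  have Fx: "(\<Sum>i<n. (dF i)\<^sup>2 * (x i)\<^sup>2) / n \<le> \<tau>"
    using xF by (simp add: mult.commute)
  show "\<mu> \<le> (\<Sum>i<n. R i) / n"
    using mean_residual_product_bounds(1)[where w=w and C=C, OF \<open>n > 0\<close> w eG Fx FG] \<mu>(2) \<tau>
    unfolding R_def by linarith
  have "(\<Sum>i<n. (R i)\<^sup>2) / n \<le> 4 * C\<^sup>2 * ((\<Sum>i<n. (e i * x i)\<^sup>2) / n + 3 * \<tau>)"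
    using mean_residual_product_bounds(2)[where w=w and C=C, OF \<open>n > 0\<close> w eG Fx FG]
    unfolding R_def .
  also have "\<dots> \<le> 4 * C\<^sup>2 * (K + 3 * \<tau>)"
    using K by (intro mult_left_mono) simp_all
  finally show "(\<Sum>i<n. (R i)\<^sup>2) / n \<le> 4 * C\<^sup>2 * (K + 3 * \<tau>)" .
qed (rule no_tie)

section \<open>The population model\<close>

lemma sq_le_one_plus_powr:
  fixes t :: real
  assumes "\<eta> > 0"
  shows "t\<^sup>2 \<le> 1 + \<bar>t\<bar> powr (2 + \<eta>)"
proof (cases "\<bar>t\<bar> \<le> 1")
  case True
  then have "t\<^sup>2 \<le> 1"
    by (simp add: abs_square_le_1)
  then show ?thesis
    by (smt (verit) powr_ge_zero)
next
  case False
  then have "t\<^sup>2 = \<bar>t\<bar> powr 2"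
    by simp
  also have "\<dots> \<le> \<bar>t\<bar> powr (2 + \<eta>)"
    using False assms by (intro powr_mono) auto
  finally show ?thesis
    by simp
qed

locale wgcm_model = P: prob_space P
  for P :: "(real \<times> real \<times> 'z::euclidean_space) measure" +
  fixes fP gP uP vP hP :: "'z \<Rightarrow> real"
  assumes sets_P[measurable_cong]: "sets P = sets borel"
    and P_E0: "absolutely_continuous lborel P"
    and fP: "is_cond_exp_fun P (\<lambda>x. snd (snd x)) (\<lambda>x. fst x) fP"
    and gP: "is_cond_exp_fun P (\<lambda>x. snd (snd x)) (\<lambda>x. fst (snd x)) gP"
    and uP: "is_nn_cond_exp_fun P (\<lambda>x. snd (snd x)) (\<lambda>x. (fst x - fP (snd (snd x)))\<^sup>2) uP"
    and vP: "is_nn_cond_exp_fun P (\<lambda>x. snd (snd x)) (\<lambda>x. (fst (snd x) - gP (snd (snd x)))\<^sup>2) vP"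
    and hP: "is_cond_exp_fun P (\<lambda>x. snd (snd x))
               (\<lambda>x. (fst x - fP (snd (snd x))) * (fst (snd x) - gP (snd (snd x)))) hP"
    and h_nonzero: "\<not> (AE x in P. hP (snd (snd x)) = 0)"
    and moment: "\<exists>\<eta>>0. (\<integral>\<^sup>+ x. ennreal (\<bar>(fst x - fP (snd (snd x))) * (fst (snd x) - gP (snd (snd x)))\<bar>
                                        powr (2 + \<eta>)) \<partial>P) < \<infinity>"
begin

abbreviation zpart :: "real \<times> real \<times> 'z \<Rightarrow> 'z"
  where "zpart x \<equiv> snd (snd x)"

abbreviation eps :: "real \<times> real \<times> 'z \<Rightarrow> real"
  where "eps x \<equiv> fst x - fP (zpart x)"

abbreviation xi :: "real \<times> real \<times> 'z \<Rightarrow> real"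
  where "xi x \<equiv> fst (snd x) - gP (zpart x)"

lemma measurable_components[measurable]:
  "(\<lambda>x::real \<times> real \<times> 'z. fst x) \<in> borel_measurable borel"
  "(\<lambda>x::real \<times> real \<times> 'z. fst (snd x)) \<in> borel_measurable borel"
  "(\<lambda>x::real \<times> real \<times> 'z. snd (snd x)) \<in> borel_measurable borel"
  by (intro borel_measurable_continuous_onI continuous_intros)+

lemma measurable_regression_functions[measurable]:
  "fP \<in> borel_measurable borel" "gP \<in> borel_measurable borel" "hP \<in> borel_measurable borel"
  "uP \<in> borel_measurable borel" "vP \<in> borel_measurable borel"
  using fP gP hP uP vP by (simp_all add: is_cond_exp_fun_def is_nn_cond_exp_fun_def)

lemma AE_uP_nonneg: "AE x in P. 0 \<le> uP (zpart x)"
  using uP unfolding is_nn_cond_exp_fun_def by auto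

lemma AE_vP_nonneg: "AE x in P. 0 \<le> vP (zpart x)"
  using vP unfolding is_nn_cond_exp_fun_def by auto

lemma
  assumes [measurable]: "\<phi> \<in> borel_measurable borel"
  shows nn_integral_eps_sq:
      "(\<integral>\<^sup>+x. ennreal ((eps x)\<^sup>2) * \<phi> (zpart x) \<partial>P) = (\<integral>\<^sup>+x. ennreal (uP (zpart x)) * \<phi> (zpart x) \<partial>P)"
    and nn_integral_xi_sq:
      "(\<integral>\<^sup>+x. ennreal ((xi x)\<^sup>2) * \<phi> (zpart x) \<partial>P) = (\<integral>\<^sup>+x. ennreal (vP (zpart x)) * \<phi> (zpart x) \<partial>P)"
  by (rule nn_integral_mult_nn_cond_exp_fun[OF P.finite_measure_axioms _ _ uP]
      nn_integral_mult_nn_cond_exp_fun[OF P.finite_measure_axioms _ _ vP]; measurable)+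

lemma integrable_eps_xi_sq: "integrable P (\<lambda>x. (eps x * xi x)\<^sup>2)"
proof -
  obtain \<eta> where \<eta>: "\<eta> > 0"
    and fin: "(\<integral>\<^sup>+ x. ennreal (\<bar>eps x * xi x\<bar> powr (2 + \<eta>)) \<partial>P) < \<infinity>"
    using moment by auto
  have "ennreal ((eps x * xi x)\<^sup>2) \<le> 1 + ennreal (\<bar>eps x * xi x\<bar> powr (2 + \<eta>))" for x
    using ennreal_leI[OF sq_le_one_plus_powr[OF \<eta>, of "eps x * xi x"]] by simp
  then have "(\<integral>\<^sup>+ x. ennreal ((eps x * xi x)\<^sup>2) \<partial>P) \<le> (\<integral>\<^sup>+ x. 1 + ennreal (\<bar>eps x * xi x\<bar> powr (2 + \<eta>)) \<partial>P)"
    by (intro nn_integral_mono)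
  also have "\<dots> = 1 + (\<integral>\<^sup>+ x. ennreal (\<bar>eps x * xi x\<bar> powr (2 + \<eta>)) \<partial>P)"
    by (subst nn_integral_add) (simp_all add: P.emeasure_space_1)
  also have "\<dots> < \<infinity>"
    using fin by simp
  finally show ?thesis
    by (intro integrableI_nonneg) (auto simp: less_top)
qed

lemma integrable_eps_xi: "integrable P (\<lambda>x. eps x * xi x)"
  by (rule P.square_integrable_imp_integrable[OF _ integrable_eps_xi_sq]) measurable

lemma
  assumes "w \<in> borel_measurable borel" and "\<And>z. \<bar>w z\<bar> \<le> C"
  shows integrable_weighted_eps_xi: "integrable P (\<lambda>x. w (zpart x) * (eps x * xi x))"
    and integral_weighted_eps_xi:
      "(\<integral>x. w (zpart x) * (eps x * xi x) \<partial>P) = (\<integral>x. w (zpart x) * hP (zpart x) \<partial>P)"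
  by (rule integrable_mult_cond_exp_fun[OF P.finite_measure_axioms _ hP integrable_eps_xi assms]
      integral_mult_cond_exp_fun[OF P.finite_measure_axioms _ hP integrable_eps_xi assms]; measurable)+

lemma integrable_hP: "integrable P (\<lambda>x. hP (zpart x))"
  by (rule integrable_cond_exp_fun[OF P.finite_measure_axioms _ hP integrable_eps_xi]) measurable

definition hP_abs_mean :: real
  where "hP_abs_mean = (\<integral>x. \<bar>hP (zpart x)\<bar> \<partial>P)"

lemma hP_abs_mean_pos: "hP_abs_mean > 0"
proof -
  have "hP_abs_mean = 0 \<longleftrightarrow> (AE x in P. \<bar>hP (zpart x)\<bar> = 0)"
    unfolding hP_abs_mean_def using integrable_hP by (intro integral_nonneg_eq_0_iff_AE) auto
  then have "hP_abs_mean \<noteq> 0"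
    using h_nonzero by simp
  then show ?thesis
    by (simp add: hP_abs_mean_def order_less_le)
qed

lemma AE_zpart:
  assumes "AE z in lborel. \<Phi> z"
  shows "AE x in P. \<Phi> (zpart x)"
proof -
  from assms obtain N where N: "{z \<in> space lborel. \<not> \<Phi> z} \<subseteq> N"
    and "emeasure lborel N = 0" "N \<in> sets lborel"
    by (rule AE_E)
  then have "UNIV \<times> (UNIV \<times> N) \<in> null_sets (lborel :: (real \<times> real \<times> 'z) measure)"
    by (intro Times_null_sets_lborel null_setsI) auto
  then have "UNIV \<times> (UNIV \<times> N) \<in> null_sets P"
    using P_E0 by (auto simp: absolutely_continuous_def)
  then show ?thesis
    using N(1) by (intro AE_I[of _ _ "UNIV \<times> (UNIV \<times> N)"]) auto
qed

lemma residual_product_level_set_null: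
  assumes "c \<noteq> 0" and [measurable]: "\<alpha> \<in> borel_measurable borel" "\<beta> \<in> borel_measurable borel"
    "w \<in> borel_measurable borel"
  shows "{x. (fst x - \<alpha> (zpart x)) * (fst (snd x) - \<beta> (zpart x)) * w (zpart x) = c} \<in> null_sets P"
proof -
  let ?S = "{x. (fst x - \<alpha> (zpart x)) * (fst (snd x) - \<beta> (zpart x)) * w (zpart x) = c}"
  have "?S \<in> null_sets lborel"
  proof (rule null_sets_lborel_of_sections)
    have "Measurable.pred borel (\<lambda>x. (fst x - \<alpha> (zpart x)) * (fst (snd x) - \<beta> (zpart x)) * w (zpart x) = c)"
      by measurable
    then show "?S \<in> sets borel"
      by (simp add: pred_def)
    fix y :: "real \<times> 'z"
    \<comment> \<open>for fixed (Y, Z) the equation is affine in X with a nonzero slope\<close>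
    have "x = \<alpha> (snd y) + c / ((fst y - \<beta> (snd y)) * w (snd y))" if "(x, y) \<in> ?S" for x
    proof -
      define d where "d = (fst y - \<beta> (snd y)) * w (snd y)"
      have eq: "(x - \<alpha> (snd y)) * d = c"
        using that by (simp add: d_def mult.assoc)
      then have "d \<noteq> 0"
        using assms(1) by auto
      with eq have "x - \<alpha> (snd y) = c / d"
        by (simp add: eq_divide_eq)
      then show ?thesis
        by (simp add: d_def)
    qed
    then show "\<exists>a. {x. (x, y) \<in> ?S} \<subseteq> {a}"
      by blast
  qed
  then show ?thesis
    using P_E0 by (auto simp: absolutely_continuous_def)
qed

end

section \<open>The sampling scheme\<close>

locale wgcm_sample = wgcm_model P fP gP uP vP hP + Q: prob_space Q
  for P :: "(real \<times> real \<times> 'z::euclidean_space) measure" and fP gP uP vP hP :: "'z \<Rightarrow> real"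
    and Q :: "'w measure" +
  fixes X Y :: "nat \<Rightarrow> 'w \<Rightarrow> real" and Z :: "nat \<Rightarrow> 'w \<Rightarrow> 'z"
    and SA :: "'a measure" and A :: "'w \<Rightarrow> 'a"
    and SB :: "'b measure" and B :: "'w \<Rightarrow> 'b"
    and what :: "nat \<Rightarrow> 'a \<Rightarrow> 'z \<Rightarrow> real"
    and fhat ghat :: "nat \<Rightarrow> 'b \<Rightarrow> 'z \<Rightarrow> real"
  assumes D_meas: "\<And>i. (\<lambda>\<omega>. (X i \<omega>, Y i \<omega>, Z i \<omega>)) \<in> borel_measurable Q"
    and D_iid: "Q.indep_vars (\<lambda>_. borel) (\<lambda>i \<omega>. (X i \<omega>, Y i \<omega>, Z i \<omega>)) UNIV"
    and D_distr: "\<And>i. distr Q borel (\<lambda>\<omega>. (X i \<omega>, Y i \<omega>, Z i \<omega>)) = P"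
    and A_meas: "A \<in> measurable Q SA" and B_meas: "B \<in> measurable Q SB"
    and indep: "Q.indep_sets
       (\<lambda>k::nat. if k = 0 then sets (vimage_algebra (space Q)
                      (\<lambda>\<omega> i. (X i \<omega>, Y i \<omega>, Z i \<omega>)) (PiM UNIV (\<lambda>_. borel)))
                 else if k = 1 then sets (vimage_algebra (space Q) A SA)
                 else sets (vimage_algebra (space Q) B SB)) {0, 1, 2}"
    and what_meas: "\<And>n. case_prod (what n) \<in> borel_measurable (SA \<Otimes>\<^sub>M borel)"
    and fhat_meas: "\<And>n. case_prod (fhat n) \<in> borel_measurable (SB \<Otimes>\<^sub>M borel)"
    and ghat_meas: "\<And>n. case_prod (ghat n) \<in> borel_measurable (SB \<Otimes>\<^sub>M borel)"
    and what_bdd: "\<exists>C>0. \<forall>n a z. \<bar>what n a z\<bar> \<le> C"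
    and AfAg: "o_P Q
       (\<lambda>n \<omega>. ((\<Sum>i<n. (fP (Z i \<omega>) - fhat n (B \<omega>) (Z i \<omega>))\<^sup>2) / real n) *
               ((\<Sum>i<n. (gP (Z i \<omega>) - ghat n (B \<omega>) (Z i \<omega>))\<^sup>2) / real n))
       (\<lambda>n \<omega>. 1 / real n)"
    and Bf: "o_P Q (\<lambda>n \<omega>. (\<Sum>i<n. (fP (Z i \<omega>) - fhat n (B \<omega>) (Z i \<omega>))\<^sup>2 * vP (Z i \<omega>)) / real n)
                   (\<lambda>n \<omega>. 1)"
    and Bg: "o_P Q (\<lambda>n \<omega>. (\<Sum>i<n. (gP (Z i \<omega>) - ghat n (B \<omega>) (Z i \<omega>))\<^sup>2 * uP (Z i \<omega>)) / real n)
                   (\<lambda>n \<omega>. 1)"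
    and what_lim: "AE \<omega> in Q. AE z in lborel. hP z \<noteq> 0 \<longrightarrow>
                   (\<lambda>n. what n (A \<omega>) z) \<longlonglongrightarrow> sgn (hP z)"
begin

abbreviation obs :: "nat \<Rightarrow> 'w \<Rightarrow> real \<times> real \<times> 'z"
  where "obs i \<omega> \<equiv> (X i \<omega>, Y i \<omega>, Z i \<omega>)"

abbreviation sample :: "'w \<Rightarrow> nat \<Rightarrow> real \<times> real \<times> 'z"
  where "sample \<omega> \<equiv> \<lambda>i. obs i \<omega>"

abbreviation aux :: "'w \<Rightarrow> 'a \<times> 'b"
  where "aux \<omega> \<equiv> (A \<omega>, B \<omega>)"

abbreviation rest :: "nat \<Rightarrow> 'w \<Rightarrow> nat \<Rightarrow> real \<times> real \<times> 'z"
  where "rest i \<omega> \<equiv> restrict (\<lambda>j. obs j \<omega>) (UNIV - {i})"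

abbreviation resid_prod :: "nat \<Rightarrow> 'w \<Rightarrow> nat \<Rightarrow> real"
  where "resid_prod n \<omega> i \<equiv>
    (X i \<omega> - fhat n (B \<omega>) (Z i \<omega>)) * (Y i \<omega> - ghat n (B \<omega>) (Z i \<omega>)) * what n (A \<omega>) (Z i \<omega>)"

lemma measurable_obs[measurable]: "(\<lambda>\<omega>. obs i \<omega>) \<in> borel_measurable Q"
  by (rule D_meas)

lemma measurable_XYZ[measurable]:
  "X i \<in> borel_measurable Q" "Y i \<in> borel_measurable Q" "Z i \<in> borel_measurable Q"
  using measurable_compose[OF measurable_obs measurable_components(1), of i]
    measurable_compose[OF measurable_obs measurable_components(2), of i]
    measurable_compose[OF measurable_obs measurable_components(3), of i]
  by simp_all

lemma measurable_sample[measurable]: "sample \<in> measurable Q (PiM UNIV (\<lambda>_. borel))"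
  by (rule measurable_PiM_single') auto

lemma measurable_aux[measurable]: "A \<in> measurable Q SA" "B \<in> measurable Q SB"
  by (fact A_meas B_meas)+

lemma measurable_Zs[measurable]: "(\<lambda>\<omega> j. Z j \<omega>) \<in> measurable Q (PiM UNIV (\<lambda>_. borel))"
  by (rule measurable_PiM_single') auto

lemma measurable_estimators[measurable (raw)]:
  "f \<in> measurable M SA \<Longrightarrow> g \<in> borel_measurable M \<Longrightarrow> (\<lambda>x. what n (f x) (g x)) \<in> borel_measurable M"
  "f' \<in> measurable M SB \<Longrightarrow> g \<in> borel_measurable M \<Longrightarrow> (\<lambda>x. fhat n (f' x) (g x)) \<in> borel_measurable M"
  "f' \<in> measurable M SB \<Longrightarrow> g \<in> borel_measurable M \<Longrightarrow> (\<lambda>x. ghat n (f' x) (g x)) \<in> borel_measurable M"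
  by (rule measurable_Pair_compose_split[OF what_meas] measurable_Pair_compose_split[OF fhat_meas]
      measurable_Pair_compose_split[OF ghat_meas]; assumption)+

lemma nn_integral_obs:
  fixes f :: "real \<times> real \<times> 'z \<Rightarrow> ennreal"
  assumes "f \<in> borel_measurable borel"
  shows "(\<integral>\<^sup>+\<omega>. f (obs i \<omega>) \<partial>Q) = (\<integral>\<^sup>+x. f x \<partial>P)"
  using nn_integral_distr[of "\<lambda>\<omega>. obs i \<omega>" Q borel f] assms
  by (simp add: D_distr measurable_cong_sets[OF sets_P refl])

lemma
  fixes f :: "real \<times> real \<times> 'z \<Rightarrow> real"
  assumes "f \<in> borel_measurable borel"
  shows integral_obs: "(\<integral>\<omega>. f (obs i \<omega>) \<partial>Q) = (\<integral>x. f x \<partial>P)"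
    and integrable_obs_iff: "integrable Q (\<lambda>\<omega>. f (obs i \<omega>)) \<longleftrightarrow> integrable P f"
  using integral_distr[of "\<lambda>\<omega>. obs i \<omega>" Q borel f] integrable_distr_eq[of "\<lambda>\<omega>. obs i \<omega>" Q borel f]
    assms by (simp_all add: D_distr)

lemma null_sets_obs:
  assumes "N \<in> null_sets P"
  shows "(\<lambda>\<omega>. obs i \<omega>) -` N \<inter> space Q \<in> null_sets Q"
proof -
  have N: "N \<in> sets borel"
    using assms by (simp add: null_sets_def sets_P)
  then have "emeasure Q ((\<lambda>\<omega>. obs i \<omega>) -` N \<inter> space Q) = emeasure P N"
    using emeasure_distr[OF measurable_obs N, of i] by (simp add: D_distr)
  then show ?thesis
    using assms measurable_sets[OF measurable_obs N, of i] by (simp add: null_sets_def)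
qed

lemma indep_sample_aux: "indep_pair Q (PiM UNIV (\<lambda>_. borel)) sample (SA \<Otimes>\<^sub>M SB) aux"
  using Q.indep_pair_of_indep_sets[OF indep] by simp

lemma indep_obs_rest: "indep_pair Q borel (\<lambda>\<omega>. obs i \<omega>) (PiM (UNIV - {i}) (\<lambda>_. borel)) (rest i)"
  using Q.indep_pair_component_rest[OF D_iid] by simp

lemma indep_obs: "i \<noteq> j \<Longrightarrow> Q.indep_var borel (\<lambda>\<omega>. obs i \<omega>) borel (\<lambda>\<omega>. obs j \<omega>)"
  using Q.indep_var_components[OF D_iid] by simp

lemma nn_integral_obs_mult_Zs_eq:
  fixes f g :: "real \<times> real \<times> 'z \<Rightarrow> ennreal" and \<Psi> :: "(nat \<Rightarrow> 'z) \<Rightarrow> ennreal"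
  assumes [measurable]: "f \<in> borel_measurable borel" "g \<in> borel_measurable borel"
    "\<Psi> \<in> borel_measurable (PiM UNIV (\<lambda>_. borel))"
    and eq: "\<And>\<phi>. \<phi> \<in> borel_measurable borel \<Longrightarrow>
      (\<integral>\<^sup>+x. f x * \<phi> (zpart x) \<partial>P) = (\<integral>\<^sup>+x. g x * \<phi> (zpart x) \<partial>P)"
  shows "(\<integral>\<^sup>+\<omega>. f (obs i \<omega>) * \<Psi> (\<lambda>j. Z j \<omega>) \<partial>Q) = (\<integral>\<^sup>+\<omega>. g (obs i \<omega>) * \<Psi> (\<lambda>j. Z j \<omega>) \<partial>Q)"
proof -
  let ?R = "PiM (UNIV - {i}) (\<lambda>_. borel :: (real \<times> real \<times> 'z) measure)"
  let ?upd = "\<lambda>z r. (\<lambda>j. zpart (r j))(i := z)"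
  have [measurable]: "(\<lambda>z. ?upd z r) \<in> measurable borel (PiM UNIV (\<lambda>_. borel))" for r
    by (rule measurable_PiM_single') auto
  have [measurable]: "(\<lambda>p. ?upd (zpart (fst p)) (snd p)) \<in> measurable (borel \<Otimes>\<^sub>M ?R) (PiM UNIV (\<lambda>_. borel))"
  proof (rule measurable_PiM_single')
    fix j
    show "(\<lambda>p. ?upd (zpart (fst p)) (snd p) j) \<in> borel_measurable (borel \<Otimes>\<^sub>M ?R)"
    proof (cases "j = i")
      case False
      then have [measurable]: "(\<lambda>r. r j) \<in> measurable ?R borel"
        by (intro measurable_component_singleton) auto
      from False show ?thesis
        by simp measurable
    qed simp
  qed auto
  have split: "(\<integral>\<^sup>+\<omega>. h (obs i \<omega>) * \<Psi> (\<lambda>j. Z j \<omega>) \<partial>Q)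
      = (\<integral>\<^sup>+r. (\<integral>\<^sup>+x. h x * \<Psi> (?upd (zpart x) r) \<partial>P) \<partial>distr Q ?R (rest i))"
    if [measurable]: "h \<in> borel_measurable borel" for h
  proof -
    have upd_rest: "?upd (Z i \<omega>) (rest i \<omega>) = (\<lambda>j. Z j \<omega>)" for \<omega>
      by (auto simp: fun_eq_iff)
    have "(\<integral>\<^sup>+\<omega>. h (obs i \<omega>) * \<Psi> (\<lambda>j. Z j \<omega>) \<partial>Q)
        = (\<integral>\<^sup>+\<omega>. (\<lambda>p. h (fst p) * \<Psi> (?upd (zpart (fst p)) (snd p))) (obs i \<omega>, rest i \<omega>) \<partial>Q)"
      by (simp only: fst_conv snd_conv upd_rest)
    also have "\<dots> = (\<integral>\<^sup>+r. (\<integral>\<^sup>+\<omega>. h (obs i \<omega>) * \<Psi> (?upd (Z i \<omega>) r) \<partial>Q) \<partial>distr Q ?R (rest i))"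
    proof -
      have F: "(\<lambda>p. h (fst p) * \<Psi> (?upd (zpart (fst p)) (snd p))) \<in> borel_measurable (borel \<Otimes>\<^sub>M ?R)"
        by measurable
      show ?thesis
        unfolding Q.nn_integral_indep_pair[OF indep_obs_rest F] by simp
    qed
    also have "\<dots> = (\<integral>\<^sup>+r. (\<integral>\<^sup>+x. h x * \<Psi> (?upd (zpart x) r) \<partial>P) \<partial>distr Q ?R (rest i))"
    proof (intro nn_integral_cong)
      fix r
      have "(\<lambda>x. h x * \<Psi> (?upd (zpart x) r)) \<in> borel_measurable borel"
        by measurable
      from nn_integral_obs[OF this, of i]
      show "(\<integral>\<^sup>+\<omega>. h (obs i \<omega>) * \<Psi> (?upd (Z i \<omega>) r) \<partial>Q) = (\<integral>\<^sup>+x. h x * \<Psi> (?upd (zpart x) r) \<partial>P)"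
        by simp
    qed
    finally show ?thesis .
  qed
  show ?thesis
    unfolding split[OF assms(1)] split[OF assms(2)] by (intro nn_integral_cong eq) measurable
qed

lemma nn_integral_truncated_mean_le:
  fixes q :: "real \<times> real \<times> 'z \<Rightarrow> real" and u \<delta> :: "'z \<Rightarrow> real"
  assumes [measurable]: "q \<in> borel_measurable borel" "u \<in> borel_measurable borel"
    "\<delta> \<in> borel_measurable borel"
    and cond: "\<And>\<phi>. \<phi> \<in> borel_measurable borel \<Longrightarrow>
      (\<integral>\<^sup>+x. ennreal ((q x)\<^sup>2) * \<phi> (zpart x) \<partial>P) = (\<integral>\<^sup>+x. ennreal (u (zpart x)) * \<phi> (zpart x) \<partial>P)"
    and u_nonneg: "AE x in P. 0 \<le> u (zpart x)"
  shows "(\<integral>\<^sup>+\<omega>. ennreal ((\<Sum>i<n. (q (obs i \<omega>))\<^sup>2 * (\<delta> (Z i \<omega>))\<^sup>2) / n)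
      * (if (\<Sum>i<n. (\<delta> (Z i \<omega>))\<^sup>2 * u (Z i \<omega>)) / n \<le> t then 1 else 0) \<partial>Q) \<le> ennreal t"
proof -
  define V where "V zs = (\<Sum>i<n. (\<delta> (zs i))\<^sup>2 * u (zs i)) / n" for zs :: "nat \<Rightarrow> 'z"
  define \<Psi> where "\<Psi> i zs = ennreal ((\<delta> (zs i))\<^sup>2 / n) * (if V zs \<le> t then 1 else 0)" for i zs
  have [measurable]: "\<Psi> i \<in> borel_measurable (PiM UNIV (\<lambda>_. borel))" for i
    unfolding \<Psi>_def V_def by measurable
  have u_obs: "AE \<omega> in Q. \<forall>i. 0 \<le> u (Z i \<omega>)"
    unfolding AE_all_countable
  proof
    fix i
    have "AE x in distr Q borel (\<lambda>\<omega>. obs i \<omega>). 0 \<le> u (zpart x)"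
      unfolding D_distr by (rule u_nonneg)
    then show "AE \<omega> in Q. 0 \<le> u (Z i \<omega>)"
      by (auto dest: AE_distrD[OF measurable_obs])
  qed
  have sum_ennreal: "ennreal ((\<Sum>i<n. a i * b i) / n) = (\<Sum>i<n. ennreal (a i) * ennreal (b i / n))"
    if "\<And>i. 0 \<le> a i" "\<And>i. 0 \<le> b i" for a b :: "nat \<Rightarrow> real"
  proof -
    have "(\<Sum>i<n. a i * b i) / n = (\<Sum>i<n. a i * (b i / n))"
      by (simp add: sum_divide_distrib)
    also have "ennreal \<dots> = (\<Sum>i<n. ennreal (a i * (b i / n)))"
      using that by (intro sum_ennreal[symmetric]) simp
    also have "\<dots> = (\<Sum>i<n. ennreal (a i) * ennreal (b i / n))"
      using that by (intro sum.cong refl ennreal_mult) simp_all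
    finally show ?thesis .
  qed
  have "(\<integral>\<^sup>+\<omega>. ennreal ((\<Sum>i<n. (q (obs i \<omega>))\<^sup>2 * (\<delta> (Z i \<omega>))\<^sup>2) / n)
      * (if (\<Sum>i<n. (\<delta> (Z i \<omega>))\<^sup>2 * u (Z i \<omega>)) / n \<le> t then 1 else 0) \<partial>Q)
      = (\<integral>\<^sup>+\<omega>. (\<Sum>i<n. ennreal ((q (obs i \<omega>))\<^sup>2) * \<Psi> i (\<lambda>j. Z j \<omega>)) \<partial>Q)"
    by (intro nn_integral_cong) (simp add: sum_ennreal \<Psi>_def V_def sum_distrib_right mult.assoc)
  also have "\<dots> = (\<Sum>i<n. \<integral>\<^sup>+\<omega>. ennreal ((q (obs i \<omega>))\<^sup>2) * \<Psi> i (\<lambda>j. Z j \<omega>) \<partial>Q)"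
    by (rule nn_integral_sum) measurable
  also have "\<dots> = (\<Sum>i<n. \<integral>\<^sup>+\<omega>. ennreal (u (Z i \<omega>)) * \<Psi> i (\<lambda>j. Z j \<omega>) \<partial>Q)"
    by (intro sum.cong refl nn_integral_obs_mult_Zs_eq[where f="\<lambda>x. ennreal ((q x)\<^sup>2)"
          and g="\<lambda>x. ennreal (u (zpart x))", simplified] cond) measurable
  also have "\<dots> = (\<integral>\<^sup>+\<omega>. (\<Sum>i<n. ennreal (u (Z i \<omega>)) * \<Psi> i (\<lambda>j. Z j \<omega>)) \<partial>Q)"
    by (rule nn_integral_sum[symmetric]) measurable
  also have "\<dots> = (\<integral>\<^sup>+\<omega>. ennreal (V (\<lambda>j. Z j \<omega>)) * (if V (\<lambda>j. Z j \<omega>) \<le> t then 1 else 0) \<partial>Q)"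
    using u_obs by (intro nn_integral_cong_AE)
      (auto simp: sum_ennreal \<Psi>_def V_def sum_distrib_right mult.assoc mult.commute)
  also have "\<dots> \<le> (\<integral>\<^sup>+\<omega>. ennreal t \<partial>Q)"
    by (intro nn_integral_mono) (simp add: ennreal_leI)
  finally show ?thesis
    by (simp add: Q.emeasure_space_1)
qed

text \<open>Markov's inequality conditionally on the auxiliary data and on all the \<open>Z\<close>'s: given
  them, the conditional mean of \<open>q(obs i)\<^sup>2\<close> is \<open>u(Z i)\<close>.\<close>

lemma emeasure_cond_Markov_le:
  fixes q :: "real \<times> real \<times> 'z \<Rightarrow> real" and u :: "'z \<Rightarrow> real" and \<delta> :: "'b \<Rightarrow> 'z \<Rightarrow> real"
  assumes [measurable]: "q \<in> borel_measurable borel" "u \<in> borel_measurable borel"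
    and \<delta>: "case_prod \<delta> \<in> borel_measurable (SB \<Otimes>\<^sub>M borel)"
    and cond: "\<And>\<phi>. \<phi> \<in> borel_measurable borel \<Longrightarrow>
      (\<integral>\<^sup>+x. ennreal ((q x)\<^sup>2) * \<phi> (zpart x) \<partial>P) = (\<integral>\<^sup>+x. ennreal (u (zpart x)) * \<phi> (zpart x) \<partial>P)"
    and u_nonneg: "AE x in P. 0 \<le> u (zpart x)"
    and "\<tau> > 0" "0 \<le> t"
  shows "emeasure Q {\<omega> \<in> space Q. \<tau> < (\<Sum>i<n. (q (obs i \<omega>))\<^sup>2 * (\<delta> (B \<omega>) (Z i \<omega>))\<^sup>2) / n
      \<and> (\<Sum>i<n. (\<delta> (B \<omega>) (Z i \<omega>))\<^sup>2 * u (Z i \<omega>)) / n \<le> t} \<le> ennreal (t / \<tau>)"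
proof -
  have [measurable (raw)]: "f \<in> measurable M SB \<Longrightarrow> g \<in> borel_measurable M \<Longrightarrow>
      (\<lambda>x. \<delta> (f x) (g x)) \<in> borel_measurable M" for f g and M :: "'c measure"
    by (rule measurable_Pair_compose_split[OF \<delta>])
  define F where "F p = ennreal ((\<Sum>i<n. (q (fst p i))\<^sup>2 * (\<delta> (snd (snd p)) (zpart (fst p i)))\<^sup>2) / n)
    * (if (\<Sum>i<n. (\<delta> (snd (snd p)) (zpart (fst p i)))\<^sup>2 * u (zpart (fst p i))) / n \<le> t then 1 else 0)"
    for p :: "(nat \<Rightarrow> real \<times> real \<times> 'z) \<times> 'a \<times> 'b"
  have [measurable]: "F \<in> borel_measurable (PiM UNIV (\<lambda>_. borel) \<Otimes>\<^sub>M (SA \<Otimes>\<^sub>M SB))"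
    unfolding F_def by measurable
  let ?S = "{\<omega> \<in> space Q. \<tau> < (\<Sum>i<n. (q (obs i \<omega>))\<^sup>2 * (\<delta> (B \<omega>) (Z i \<omega>))\<^sup>2) / n
      \<and> (\<Sum>i<n. (\<delta> (B \<omega>) (Z i \<omega>))\<^sup>2 * u (Z i \<omega>)) / n \<le> t}"
  have "?S \<in> sets Q"
    by measurable
  then have "emeasure Q ?S = (\<integral>\<^sup>+\<omega>. indicator ?S \<omega> \<partial>Q)"
    by simp
  also have "\<dots> \<le> (\<integral>\<^sup>+\<omega>. ennreal (1 / \<tau>) * F (sample \<omega>, aux \<omega>) \<partial>Q)"
  proof (intro nn_integral_mono)
    fix \<omega> assume "\<omega> \<in> space Q"
    show "indicator ?S \<omega> \<le> ennreal (1 / \<tau>) * F (sample \<omega>, aux \<omega>)"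
    proof (cases "\<omega> \<in> ?S")
      case True
      have "1 \<le> (1 / \<tau>) * E" if "\<tau> < E" for E
        using that \<open>\<tau> > 0\<close> by (simp add: field_simps)
      with True have "1 \<le> (1 / \<tau>) * ((\<Sum>i<n. (q (obs i \<omega>))\<^sup>2 * (\<delta> (B \<omega>) (Z i \<omega>))\<^sup>2) / n)"
        by blast
      with True show ?thesis
        using \<open>\<tau> > 0\<close> by (simp add: F_def ennreal_mult[symmetric] ennreal_leI)
    qed simp
  qed
  also have "\<dots> = ennreal (1 / \<tau>) * (\<integral>\<^sup>+ab. (\<integral>\<^sup>+\<omega>. F (sample \<omega>, ab) \<partial>Q) \<partial>distr Q (SA \<Otimes>\<^sub>M SB) aux)"
    by (simp add: nn_integral_cmult Q.nn_integral_indep_pair[OF indep_sample_aux])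
  also have "\<dots> \<le> ennreal (1 / \<tau>) * (\<integral>\<^sup>+ab. ennreal t \<partial>distr Q (SA \<Otimes>\<^sub>M SB) aux)"
  proof (intro mult_left_mono nn_integral_mono)
    fix ab assume "ab \<in> space (distr Q (SA \<Otimes>\<^sub>M SB) aux)"
    then have [measurable]: "snd ab \<in> space SB"
      by (auto simp: space_pair_measure)
    show "(\<integral>\<^sup>+\<omega>. F (sample \<omega>, ab) \<partial>Q) \<le> ennreal t"
      unfolding F_def fst_conv snd_conv using cond u_nonneg
      by (intro nn_integral_truncated_mean_le) measurable
  qed simp
  also have "\<dots> = ennreal (t / \<tau>)"
  proof -
    interpret aux: prob_space "distr Q (SA \<Otimes>\<^sub>M SB) aux"
      by (rule Q.prob_space_distr) measurable
    show ?thesis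
      using \<open>\<tau> > 0\<close> \<open>0 \<le> t\<close> aux.emeasure_space_1 by (simp add: ennreal_mult[symmetric])
  qed
  finally show ?thesis .
qed

lemma o_P_weighted_residual_sq:
  fixes q :: "real \<times> real \<times> 'z \<Rightarrow> real" and u :: "'z \<Rightarrow> real" and \<delta> :: "nat \<Rightarrow> 'b \<Rightarrow> 'z \<Rightarrow> real"
  assumes qu[measurable]: "q \<in> borel_measurable borel" "u \<in> borel_measurable borel"
    and \<delta>: "\<And>n. case_prod (\<delta> n) \<in> borel_measurable (SB \<Otimes>\<^sub>M borel)"
    and cond: "\<And>\<phi>. \<phi> \<in> borel_measurable borel \<Longrightarrow>
      (\<integral>\<^sup>+x. ennreal ((q x)\<^sup>2) * \<phi> (zpart x) \<partial>P) = (\<integral>\<^sup>+x. ennreal (u (zpart x)) * \<phi> (zpart x) \<partial>P)"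
    and u_nonneg: "AE x in P. 0 \<le> u (zpart x)"
    and rate: "o_P Q (\<lambda>n \<omega>. (\<Sum>i<n. (\<delta> n (B \<omega>) (Z i \<omega>))\<^sup>2 * u (Z i \<omega>)) / n) (\<lambda>n \<omega>. 1)"
  shows "o_P Q (\<lambda>n \<omega>. (\<Sum>i<n. (q (obs i \<omega>))\<^sup>2 * (\<delta> n (B \<omega>) (Z i \<omega>))\<^sup>2) / n) (\<lambda>n \<omega>. 1)"
  unfolding o_P_def
proof (intro allI impI measure_tendsto_zeroI)
  have [measurable (raw)]: "f \<in> measurable M SB \<Longrightarrow> g \<in> borel_measurable M \<Longrightarrow>
      (\<lambda>x. \<delta> n (f x) (g x)) \<in> borel_measurable M" for f g n and M :: "'c measure"
    by (rule measurable_Pair_compose_split[OF \<delta>])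
  fix \<tau> e :: real assume "\<tau> > 0" "e > 0"
  define t where "t = \<tau> * e / 2"
  have "t > 0"
    using \<open>\<tau> > 0\<close> \<open>e > 0\<close> by (simp add: t_def)
  let ?V = "\<lambda>n \<omega>. (\<Sum>i<n. (q (obs i \<omega>))\<^sup>2 * (\<delta> n (B \<omega>) (Z i \<omega>))\<^sup>2) / n"
  let ?U = "\<lambda>n \<omega>. (\<Sum>i<n. (\<delta> n (B \<omega>) (Z i \<omega>))\<^sup>2 * u (Z i \<omega>)) / n"
  have "(\<lambda>n. measure Q {\<omega> \<in> space Q. t < \<bar>?U n \<omega> / 1\<bar>}) \<longlonglongrightarrow> 0"
    using rate \<open>t > 0\<close> unfolding o_P_def by blast
  then have "eventually (\<lambda>n. measure Q {\<omega> \<in> space Q. t < \<bar>?U n \<omega> / 1\<bar>} < e / 2) sequentially"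
    using \<open>e > 0\<close> by (intro order_tendstoD(2)) auto
  then show "eventually (\<lambda>n. measure Q {\<omega> \<in> space Q. \<tau> < \<bar>?V n \<omega> / 1\<bar>} < e) sequentially"
  proof eventually_elim
    case (elim n)
    have "{\<omega> \<in> space Q. \<tau> < \<bar>?V n \<omega> / 1\<bar>}
        \<subseteq> {\<omega> \<in> space Q. \<tau> < ?V n \<omega> \<and> ?U n \<omega> \<le> t} \<union> {\<omega> \<in> space Q. t < \<bar>?U n \<omega> / 1\<bar>}"
    proof safe
      fix \<omega> assume "\<tau> < \<bar>?V n \<omega> / 1\<bar>" "\<not> t < \<bar>?U n \<omega> / 1\<bar>"
      moreover have "\<bar>?V n \<omega>\<bar> = ?V n \<omega>"
        by (simp add: sum_nonneg)
      ultimately show "\<tau> < ?V n \<omega>" "?U n \<omega> \<le> t"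
        using abs_ge_self[of "?U n \<omega>"] unfolding div_by_1 by linarith+
    qed
    then have "measure Q {\<omega> \<in> space Q. \<tau> < \<bar>?V n \<omega> / 1\<bar>}
        \<le> measure Q {\<omega> \<in> space Q. \<tau> < ?V n \<omega> \<and> ?U n \<omega> \<le> t} + measure Q {\<omega> \<in> space Q. t < \<bar>?U n \<omega> / 1\<bar>}"
      by (intro order_trans[OF Q.finite_measure_mono measure_Un_le]) (simp_all, measurable)
    moreover have "measure Q {\<omega> \<in> space Q. \<tau> < ?V n \<omega> \<and> ?U n \<omega> \<le> t} \<le> t / \<tau>"
      using emeasure_cond_Markov_le[where \<delta>="\<delta> n" and t=t and n=n, OF qu \<delta> cond u_nonneg \<open>\<tau> > 0\<close>]
        \<open>t > 0\<close> \<open>\<tau> > 0\<close>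
      by (simp add: Q.emeasure_eq_measure)
    moreover have "t / \<tau> = e / 2"
      using \<open>\<tau> > 0\<close> by (simp add: t_def)
    ultimately show ?case
      using elim by linarith
  qed
qed

definition weight_bound :: real
  where "weight_bound = (SOME C. C > 0 \<and> (\<forall>n a z. \<bar>what n a z\<bar> \<le> C))"

lemma weight_bound: "weight_bound > 0" "\<bar>what n a z\<bar> \<le> weight_bound"
proof -
  have "weight_bound > 0 \<and> (\<forall>n a z. \<bar>what n a z\<bar> \<le> weight_bound)"
    unfolding weight_bound_def using what_bdd by (rule someI_ex)
  then show "weight_bound > 0" "\<bar>what n a z\<bar> \<le> weight_bound"
    by auto
qed

lemma o_P_eps_sq_ghat:
  "o_P Q (\<lambda>n \<omega>. (\<Sum>i<n. (X i \<omega> - fP (Z i \<omega>))\<^sup>2 * (gP (Z i \<omega>) - ghat n (B \<omega>) (Z i \<omega>))\<^sup>2) / n)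
     (\<lambda>n \<omega>. 1)"
proof -
  have "case_prod (\<lambda>b z. gP z - ghat n b z) \<in> borel_measurable (SB \<Otimes>\<^sub>M borel)" for n
    by measurable
  then show ?thesis
    using AE_uP_nonneg o_P_weighted_residual_sq[where q="\<lambda>x. eps x" and u=uP and \<delta>="\<lambda>n b z. gP z - ghat n b z",
        OF _ _ _ nn_integral_eps_sq _ Bg]
    by simp
qed

lemma o_P_xi_sq_fhat:
  "o_P Q (\<lambda>n \<omega>. (\<Sum>i<n. (Y i \<omega> - gP (Z i \<omega>))\<^sup>2 * (fP (Z i \<omega>) - fhat n (B \<omega>) (Z i \<omega>))\<^sup>2) / n)
     (\<lambda>n \<omega>. 1)"
proof -
  have "case_prod (\<lambda>b z. fP z - fhat n b z) \<in> borel_measurable (SB \<Otimes>\<^sub>M borel)" for n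
    by measurable
  then show ?thesis
    using AE_vP_nonneg o_P_weighted_residual_sq[where q="\<lambda>x. xi x" and u=vP and \<delta>="\<lambda>n b z. fP z - fhat n b z",
        OF _ _ _ nn_integral_xi_sq _ Bf]
    by simp
qed

definition sigma2 :: real
  where "sigma2 = (\<integral>x. (eps x * xi x)\<^sup>2 \<partial>P)"

lemma prob_mean_eps_xi_sq_gt_le:
  assumes "n > 0" "K > 0"
  shows "measure Q {\<omega> \<in> space Q. K < (\<Sum>i<n. ((X i \<omega> - fP (Z i \<omega>)) * (Y i \<omega> - gP (Z i \<omega>)))\<^sup>2) / n}
    \<le> sigma2 / K"
proof -
  let ?u = "\<lambda>\<omega>. (\<Sum>i<n. ((X i \<omega> - fP (Z i \<omega>)) * (Y i \<omega> - gP (Z i \<omega>)))\<^sup>2) / n"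
  have meas: "(\<lambda>x. (eps x * xi x)\<^sup>2) \<in> borel_measurable borel"
    by measurable
  have "integrable Q (\<lambda>\<omega>. ((X i \<omega> - fP (Z i \<omega>)) * (Y i \<omega> - gP (Z i \<omega>)))\<^sup>2)" for i
    using integrable_obs_iff[OF meas, of i] integrable_eps_xi_sq by simp
  moreover have "(\<integral>\<omega>. ((X i \<omega> - fP (Z i \<omega>)) * (Y i \<omega> - gP (Z i \<omega>)))\<^sup>2 \<partial>Q) = sigma2" for i
    using integral_obs[OF meas, of i] by (simp add: sigma2_def)
  ultimately have "integrable Q ?u" "(\<integral>\<omega>. ?u \<omega> \<partial>Q) = sigma2"
    using \<open>n > 0\<close> by simp_all
  have "measure Q {\<omega> \<in> space Q. K < ?u \<omega>} \<le> measure Q {\<omega> \<in> space Q. K \<le> ?u \<omega>}"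
    by (intro Q.finite_measure_mono) auto
  also have "\<dots> \<le> (\<integral>\<omega>. ?u \<omega> \<partial>Q) / K"
    using \<open>integrable Q ?u\<close> \<open>K > 0\<close>
    by (intro integral_Markov_inequality_measure[where A="space Q"]) (auto intro!: divide_nonneg_nonneg sum_nonneg)
  also have "\<dots> = sigma2 / K"
    using \<open>(\<integral>\<omega>. ?u \<omega> \<partial>Q) = sigma2\<close> by (simp only:)
  finally show ?thesis .
qed

definition wmean :: "nat \<Rightarrow> 'a \<Rightarrow> real"
  where "wmean n a = (\<integral>x. what n a (zpart x) * (eps x * xi x) \<partial>P)"

lemma measurable_wmean[measurable]: "wmean n \<in> borel_measurable SA"
proof -
  have "(\<lambda>(a, x). what n a (zpart x) * (eps x * xi x)) \<in> borel_measurable (SA \<Otimes>\<^sub>M P)"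
    by measurable
  then show ?thesis
    unfolding wmean_def by (rule P.borel_measurable_lebesgue_integral)
qed

lemma wmean_tendsto: "AE \<omega> in Q. (\<lambda>n. wmean n (A \<omega>)) \<longlonglongrightarrow> hP_abs_mean"
  using what_lim AE_space
proof eventually_elim
  case (elim \<omega>)
  have [measurable]: "A \<omega> \<in> space SA"
    using elim(2) by (rule measurable_space[OF A_meas])
  have "wmean n (A \<omega>) = (\<integral>x. what n (A \<omega>) (zpart x) * hP (zpart x) \<partial>P)" for n
    unfolding wmean_def by (rule integral_weighted_eps_xi[OF _ weight_bound(2)]) measurable
  moreover have "(\<lambda>n. \<integral>x. what n (A \<omega>) (zpart x) * hP (zpart x) \<partial>P) \<longlonglongrightarrow> (\<integral>x. \<bar>hP (zpart x)\<bar> \<partial>P)"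
  proof (rule integral_dominated_convergence[where w="\<lambda>x. weight_bound * \<bar>hP (zpart x)\<bar>"])
    show "AE x in P. (\<lambda>n. what n (A \<omega>) (zpart x) * hP (zpart x)) \<longlonglongrightarrow> \<bar>hP (zpart x)\<bar>"
      using AE_zpart[OF elim(1)]
    proof eventually_elim
      case (elim x)
      show ?case
      proof (cases "hP (zpart x) = 0")
        case False
        then have "(\<lambda>n. what n (A \<omega>) (zpart x) * hP (zpart x)) \<longlonglongrightarrow> sgn (hP (zpart x)) * hP (zpart x)"
          using elim by (intro tendsto_mult_right) auto
        then show ?thesis
          by (simp add: abs_sgn mult.commute)
      qed simp
    qed
    show "AE x in P. norm (what n (A \<omega>) (zpart x) * hP (zpart x)) \<le> weight_bound * \<bar>hP (zpart x)\<bar>" for n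
      using weight_bound(2) by (intro AE_I2) (simp add: abs_mult mult_right_mono)
  qed (use integrable_hP in \<open>simp_all, measurable\<close>)
  ultimately show ?case
    by (simp add: hP_abs_mean_def)
qed

lemma emeasure_empirical_wmean_dev_le:
  assumes [measurable]: "a \<in> space SA" and "n > 0" "r > 0"
  shows "emeasure Q {\<omega> \<in> space Q. r \<le> \<bar>(\<Sum>i<n. what n a (Z i \<omega>)
      * ((X i \<omega> - fP (Z i \<omega>)) * (Y i \<omega> - gP (Z i \<omega>)))) / n - wmean n a\<bar>}
    \<le> ennreal (weight_bound\<^sup>2 * sigma2 / (n * r\<^sup>2))"
proof -
  let ?G = "\<lambda>a x. what n a (zpart x) * (eps x * xi x)"
  let ?H = "\<lambda>x. ?G a x - wmean n a"
  have sq_le: "(?G a x)\<^sup>2 \<le> weight_bound\<^sup>2 * (eps x * xi x)\<^sup>2" for x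
    using power_mono[OF weight_bound(2)[of n a "zpart x"] abs_ge_zero, of 2]
    by (simp add: power_mult_distrib mult_right_mono)
  have int_G: "integrable P (?G a)"
    by (rule integrable_weighted_eps_xi[OF _ weight_bound(2)]) measurable
  have int_G2: "integrable P (\<lambda>x. (?G a x)\<^sup>2)"
  proof (rule Bochner_Integration.integrable_bound[where f="\<lambda>x. weight_bound\<^sup>2 * (eps x * xi x)\<^sup>2"])
    show "integrable P (\<lambda>x. weight_bound\<^sup>2 * (eps x * xi x)\<^sup>2)"
      using integrable_eps_xi_sq by simp
    show "(\<lambda>x. (?G a x)\<^sup>2) \<in> borel_measurable P"
      by measurable
    show "AE x in P. norm ((?G a x)\<^sup>2) \<le> norm (weight_bound\<^sup>2 * (eps x * xi x)\<^sup>2)"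
      using sq_le by (intro AE_I2) simp
  qed
  have sq_diff: "(g - m)\<^sup>2 = g\<^sup>2 - 2 * m * g + m\<^sup>2" for g m :: real
    by (simp add: power2_diff)
  have H_sq: "(\<lambda>x. (?H x)\<^sup>2) = (\<lambda>x. (?G a x)\<^sup>2 - 2 * wmean n a * ?G a x + (wmean n a)\<^sup>2)"
    by (rule ext) (rule sq_diff)
  have "(\<integral>x. (?H x)\<^sup>2 \<partial>P) = (\<integral>x. (?G a x)\<^sup>2 \<partial>P) - (wmean n a)\<^sup>2"
    unfolding H_sq using int_G int_G2 by (simp add: wmean_def power2_eq_square P.prob_space)
  also have "\<dots> \<le> (\<integral>x. (?G a x)\<^sup>2 \<partial>P)"
    by simp
  also have "\<dots> \<le> weight_bound\<^sup>2 * sigma2"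
    using integral_mono[OF int_G2 _ sq_le] integrable_eps_xi_sq by (simp add: sigma2_def)
  finally have H_sq_le: "(\<integral>x. (?H x)\<^sup>2 \<partial>P) \<le> weight_bound\<^sup>2 * sigma2" .
  have "Q.prob {\<omega> \<in> space Q. r \<le> \<bar>(\<Sum>i<n. ?H (obs i \<omega>)) / n\<bar>} \<le> weight_bound\<^sup>2 * sigma2 / (n * r\<^sup>2)"
  proof (rule Q.prob_abs_mean_ge_le[OF _ _ _ _ _ \<open>n > 0\<close> \<open>r > 0\<close>])
    fix i j :: nat assume "i \<noteq> j"
    then have "Q.indep_var borel (?H \<circ> (\<lambda>\<omega>. obs i \<omega>)) borel (?H \<circ> (\<lambda>\<omega>. obs j \<omega>))"
      by (intro Q.indep_var_compose[OF indep_obs]) measurable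
    then show "Q.indep_var borel (\<lambda>\<omega>. ?H (obs i \<omega>)) borel (\<lambda>\<omega>. ?H (obs j \<omega>))"
      by (simp add: comp_def)
  next
    fix i
    have [measurable]: "?H \<in> borel_measurable borel" "(\<lambda>x. (?H x)\<^sup>2) \<in> borel_measurable borel"
      by measurable
    show "(\<lambda>\<omega>. ?H (obs i \<omega>)) \<in> borel_measurable Q"
      by measurable
    show "integrable Q (\<lambda>\<omega>. (?H (obs i \<omega>))\<^sup>2)"
      using int_G int_G2 by (subst integrable_obs_iff) (simp_all add: H_sq)
    show "(\<integral>\<omega>. ?H (obs i \<omega>) \<partial>Q) = 0"
      using int_G by (subst integral_obs) (simp_all add: wmean_def P.prob_space)
    show "(\<integral>\<omega>. (?H (obs i \<omega>))\<^sup>2 \<partial>Q) \<le> weight_bound\<^sup>2 * sigma2"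
      using H_sq_le by (subst integral_obs) simp_all
  qed
  moreover have "(\<Sum>i<n. g i - c) / n = (\<Sum>i<n. g i) / n - c" for g :: "nat \<Rightarrow> real" and c
    using \<open>n > 0\<close> by (simp add: sum_subtractf diff_divide_distrib)
  ultimately show ?thesis
    by (simp add: Q.emeasure_eq_measure ennreal_leI)
qed

lemma prob_empirical_wmean_dev_le:
  assumes "n > 0" "r > 0"
  shows "measure Q {\<omega> \<in> space Q. r \<le> \<bar>(\<Sum>i<n. what n (A \<omega>) (Z i \<omega>)
      * ((X i \<omega> - fP (Z i \<omega>)) * (Y i \<omega> - gP (Z i \<omega>)))) / n - wmean n (A \<omega>)\<bar>}
    \<le> weight_bound\<^sup>2 * sigma2 / (n * r\<^sup>2)"
proof -
  let ?G = "\<lambda>a x. what n a (zpart x) * (eps x * xi x)"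
  have "emeasure Q {\<omega> \<in> space Q. r \<le> \<bar>(\<Sum>i<n. ?G (fst (aux \<omega>)) (sample \<omega> i)) / n - wmean n (fst (aux \<omega>))\<bar>}
      \<le> ennreal (weight_bound\<^sup>2 * sigma2 / (n * r\<^sup>2))"
    using indep_sample_aux
  proof (rule Q.emeasure_indep_pair_le[where \<Phi>="\<lambda>d ab. r \<le> \<bar>(\<Sum>i<n. ?G (fst ab) (d i)) / n - wmean n (fst ab)\<bar>"
        and X=sample and Y=aux])
    show "Measurable.pred (PiM (UNIV :: nat set) (\<lambda>_. borel) \<Otimes>\<^sub>M (SA \<Otimes>\<^sub>M SB))
        (\<lambda>p. r \<le> \<bar>(\<Sum>i<n. ?G (fst (snd p)) (fst p i)) / n - wmean n (fst (snd p))\<bar>)"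
      by measurable
    fix ab assume "ab \<in> space (SA \<Otimes>\<^sub>M SB)"
    then have "fst ab \<in> space SA"
      by (auto simp: space_pair_measure)
    from emeasure_empirical_wmean_dev_le[OF this assms]
    show "emeasure Q {\<omega> \<in> space Q. r \<le> \<bar>(\<Sum>i<n. ?G (fst ab) (sample \<omega> i)) / n - wmean n (fst ab)\<bar>}
        \<le> ennreal (weight_bound\<^sup>2 * sigma2 / (n * r\<^sup>2))"
      by simp
  qed
  then show ?thesis
    using weight_bound(1) by (simp add: Q.emeasure_eq_measure sigma2_def)
qed

definition resid_fun :: "nat \<Rightarrow> 'a \<times> 'b \<Rightarrow> real \<times> real \<times> 'z \<Rightarrow> real"
  where "resid_fun n ab x = (fst x - fhat n (snd ab) (zpart x)) * (fst (snd x) - ghat n (snd ab) (zpart x))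
    * what n (fst ab) (zpart x)"

lemma measurable_resid_fun[measurable (raw)]:
  assumes "f \<in> measurable M (SA \<Otimes>\<^sub>M SB)" and "g \<in> borel_measurable M"
  shows "(\<lambda>x. resid_fun n (f x) (g x)) \<in> borel_measurable M"
proof -
  have "case_prod (resid_fun n) \<in> borel_measurable ((SA \<Otimes>\<^sub>M SB) \<Otimes>\<^sub>M borel)"
    unfolding resid_fun_def by measurable
  then show ?thesis
    using assms by (rule measurable_Pair_compose_split)
qed

lemma emeasure_resid_fun_tie_le:
  assumes ab[measurable]: "ab \<in> space (SA \<Otimes>\<^sub>M SB)"
  shows "emeasure Q {\<omega> \<in> space Q. resid_fun n ab (obs 1 \<omega>) = resid_fun n ab (obs 0 \<omega>)
    \<and> resid_fun n ab (obs 0 \<omega>) \<noteq> 0} \<le> 0"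
proof -
  let ?R = "resid_fun n ab"
  have [measurable]: "(\<lambda>p. snd p 0) \<in> borel_measurable (borel \<Otimes>\<^sub>M PiM (UNIV - {1::nat}) (\<lambda>_. borel))"
    by (rule measurable_compose[OF measurable_snd measurable_component_singleton]) simp
  have "emeasure Q {\<omega> \<in> space Q. ?R (obs 1 \<omega>) = ?R (rest 1 \<omega> 0) \<and> ?R (rest 1 \<omega> 0) \<noteq> 0} \<le> 0"
    using indep_obs_rest[of 1]
  proof (rule Q.emeasure_indep_pair_le[where \<Phi>="\<lambda>x r. ?R x = ?R (r 0) \<and> ?R (r 0) \<noteq> 0"
        and X="\<lambda>\<omega>. obs 1 \<omega>" and Y="rest 1"])
    show "Measurable.pred (borel \<Otimes>\<^sub>M PiM (UNIV - {1::nat}) (\<lambda>_. borel))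
        (\<lambda>p. ?R (fst p) = ?R (snd p 0) \<and> ?R (snd p 0) \<noteq> 0)"
      by measurable
    fix r :: "nat \<Rightarrow> real \<times> real \<times> 'z"
    show "emeasure Q {\<omega> \<in> space Q. ?R (obs 1 \<omega>) = ?R (r 0) \<and> ?R (r 0) \<noteq> 0} \<le> 0"
    proof (cases "?R (r 0) = 0")
      case False
      have [measurable]: "fst ab \<in> space SA" "snd ab \<in> space SB"
        using ab by (auto simp: space_pair_measure)
      have "{x. ?R x = ?R (r 0)} \<in> null_sets P"
        using False unfolding resid_fun_def by (intro residual_product_level_set_null) measurable
      then have null: "(\<lambda>\<omega>. obs 1 \<omega>) -` {x. ?R x = ?R (r 0)} \<inter> space Q \<in> null_sets Q"
        by (rule null_sets_obs)
      have "{\<omega> \<in> space Q. ?R (obs 1 \<omega>) = ?R (r 0) \<and> ?R (r 0) \<noteq> 0}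
          \<subseteq> (\<lambda>\<omega>. obs 1 \<omega>) -` {x. ?R x = ?R (r 0)} \<inter> space Q"
        by blast
      with null show ?thesis
        by (simp add: emeasure_eq_0[OF null_setsD2 null_setsD1])
    qed simp
  qed
  then show ?thesis
    by simp
qed

lemma prob_resid_prod_tie:
  "measure Q {\<omega> \<in> space Q. resid_prod n \<omega> 0 = resid_prod n \<omega> 1 \<and> resid_prod n \<omega> 0 \<noteq> 0} = 0"
proof -
  have [measurable]: "(\<lambda>p. fst p i) \<in> borel_measurable (PiM UNIV (\<lambda>_. borel) \<Otimes>\<^sub>M (SA \<Otimes>\<^sub>M SB))"
    for i :: nat
    by (rule measurable_compose[OF measurable_fst measurable_component_singleton]) simp
  have "emeasure Q {\<omega> \<in> space Q. resid_fun n (aux \<omega>) (sample \<omega> 1) = resid_fun n (aux \<omega>) (sample \<omega> 0)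
      \<and> resid_fun n (aux \<omega>) (sample \<omega> 0) \<noteq> 0} \<le> 0"
    using indep_sample_aux
  proof (rule Q.emeasure_indep_pair_le[where
        \<Phi>="\<lambda>d ab. resid_fun n ab (d 1) = resid_fun n ab (d 0) \<and> resid_fun n ab (d 0) \<noteq> 0"
        and X=sample and Y=aux])
    show "Measurable.pred (PiM (UNIV :: nat set) (\<lambda>_. borel) \<Otimes>\<^sub>M (SA \<Otimes>\<^sub>M SB))
        (\<lambda>p. resid_fun n (snd p) (fst p 1) = resid_fun n (snd p) (fst p 0) \<and> resid_fun n (snd p) (fst p 0) \<noteq> 0)"
      by measurable
  qed (rule emeasure_resid_fun_tie_le)
  moreover have "{\<omega> \<in> space Q. resid_prod n \<omega> 0 = resid_prod n \<omega> 1 \<and> resid_prod n \<omega> 0 \<noteq> 0}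
      = {\<omega> \<in> space Q. resid_fun n (aux \<omega>) (sample \<omega> 1) = resid_fun n (aux \<omega>) (sample \<omega> 0)
        \<and> resid_fun n (aux \<omega>) (sample \<omega> 0) \<noteq> 0}"
    by (auto simp: resid_fun_def)
  ultimately show ?thesis
    by (simp add: Q.emeasure_eq_measure)
qed

lemma prob_empirical_wmean_small:
  "(\<lambda>n. measure Q {\<omega> \<in> space Q. (\<Sum>i<n. what n (A \<omega>) (Z i \<omega>)
      * ((X i \<omega> - fP (Z i \<omega>)) * (Y i \<omega> - gP (Z i \<omega>)))) / n < hP_abs_mean / 2}) \<longlonglongrightarrow> 0"
proof -
  let ?m = "\<lambda>n \<omega>. (\<Sum>i<n. what n (A \<omega>) (Z i \<omega>) * ((X i \<omega> - fP (Z i \<omega>)) * (Y i \<omega> - gP (Z i \<omega>)))) / n"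
  let ?c = "weight_bound\<^sup>2 * sigma2 / (hP_abs_mean / 4)\<^sup>2"
  have lim: "(\<lambda>n. measure Q {\<omega> \<in> space Q. wmean n (A \<omega>) < 3 * hP_abs_mean / 4}) \<longlonglongrightarrow> 0"
    using hP_abs_mean_pos by (intro Q.prob_less_tendsto_zero[OF wmean_tendsto]) simp_all
  have bound: "measure Q {\<omega> \<in> space Q. ?m n \<omega> < hP_abs_mean / 2}
      \<le> measure Q {\<omega> \<in> space Q. wmean n (A \<omega>) < 3 * hP_abs_mean / 4} + ?c / n" if "n > 0" for n
  proof -
    have "{\<omega> \<in> space Q. ?m n \<omega> < hP_abs_mean / 2} \<subseteq> {\<omega> \<in> space Q. wmean n (A \<omega>) < 3 * hP_abs_mean / 4}
        \<union> {\<omega> \<in> space Q. hP_abs_mean / 4 \<le> \<bar>?m n \<omega> - wmean n (A \<omega>)\<bar>}"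
    proof -
      have "u < 3 * c / 4 \<or> c / 4 \<le> \<bar>v - u\<bar>" if "v < c / 2" for u v c :: real
        using that by linarith
      then show ?thesis
        by blast
    qed
    then have "measure Q {\<omega> \<in> space Q. ?m n \<omega> < hP_abs_mean / 2}
        \<le> measure Q {\<omega> \<in> space Q. wmean n (A \<omega>) < 3 * hP_abs_mean / 4}
          + measure Q {\<omega> \<in> space Q. hP_abs_mean / 4 \<le> \<bar>?m n \<omega> - wmean n (A \<omega>)\<bar>}"
      by (intro order_trans[OF Q.finite_measure_mono measure_Un_le]) (simp_all, measurable)
    moreover have "measure Q {\<omega> \<in> space Q. hP_abs_mean / 4 \<le> \<bar>?m n \<omega> - wmean n (A \<omega>)\<bar>} \<le> ?c / n"
      using prob_empirical_wmean_dev_le[OF that, of "hP_abs_mean / 4"] hP_abs_mean_pos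
      by (simp add: field_simps)
    ultimately show ?thesis
      by linarith
  qed
  have ev: "eventually (\<lambda>n. measure Q {\<omega> \<in> space Q. ?m n \<omega> < hP_abs_mean / 2}
      \<le> measure Q {\<omega> \<in> space Q. wmean n (A \<omega>) < 3 * hP_abs_mean / 4} + ?c / n) sequentially"
    using eventually_gt_at_top[of 0] by eventually_elim (rule bound)
  show ?thesis
    by (rule tendsto_sandwich[OF _ ev tendsto_const tendsto_add_zero[OF lim lim_const_over_n[of ?c]]]) simp
qed

text \<open>Chosen so that \<open>3 * weight_bound * sqrt cross_tol = hP_abs_mean / 4\<close>.\<close>

definition cross_tol :: real
  where "cross_tol = (hP_abs_mean / (12 * weight_bound))\<^sup>2"

definition exceptional_event :: "nat \<Rightarrow> 'w set"
  where "exceptional_event n = {\<omega> \<in> space Q.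
    (\<Sum>i<n. what n (A \<omega>) (Z i \<omega>) * ((X i \<omega> - fP (Z i \<omega>)) * (Y i \<omega> - gP (Z i \<omega>)))) / n < hP_abs_mean / 2
    \<or> cross_tol < \<bar>(\<Sum>i<n. (X i \<omega> - fP (Z i \<omega>))\<^sup>2 * (gP (Z i \<omega>) - ghat n (B \<omega>) (Z i \<omega>))\<^sup>2) / n / 1\<bar>
    \<or> cross_tol < \<bar>(\<Sum>i<n. (Y i \<omega> - gP (Z i \<omega>))\<^sup>2 * (fP (Z i \<omega>) - fhat n (B \<omega>) (Z i \<omega>))\<^sup>2) / n / 1\<bar>
    \<or> cross_tol < \<bar>((\<Sum>i<n. (fP (Z i \<omega>) - fhat n (B \<omega>) (Z i \<omega>))\<^sup>2) / real n)
        * ((\<Sum>i<n. (gP (Z i \<omega>) - ghat n (B \<omega>) (Z i \<omega>))\<^sup>2) / real n) / (1 / real n)\<bar>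
    \<or> (resid_prod n \<omega> 0 = resid_prod n \<omega> 1 \<and> resid_prod n \<omega> 0 \<noteq> 0)}"

lemma cross_tol_pos: "cross_tol > 0"
  using hP_abs_mean_pos weight_bound(1) by (simp add: cross_tol_def)

lemma measure_exceptional_event_tendsto_zero: "(\<lambda>n. measure Q (exceptional_event n)) \<longlonglongrightarrow> 0"
  unfolding exceptional_event_def
  using prob_empirical_wmean_small prob_resid_prod_tie
    o_P_eps_sq_ghat[unfolded o_P_def, rule_format, OF cross_tol_pos]
    o_P_xi_sq_fhat[unfolded o_P_def, rule_format, OF cross_tol_pos]
    AfAg[unfolded o_P_def, rule_format, OF cross_tol_pos]
  by (intro Q.measure_disj_tendsto_zero) (simp_all, measurable?)

lemma Tstat_ge_outside_exceptional:
  assumes \<omega>: "\<omega> \<in> space Q - exceptional_event n" and "2 \<le> n"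
    and K: "(\<Sum>i<n. ((X i \<omega> - fP (Z i \<omega>)) * (Y i \<omega> - gP (Z i \<omega>)))\<^sup>2) / n \<le> K"
  shows "sqrt n * (hP_abs_mean / 4) / sqrt (4 * weight_bound\<^sup>2 * (K + 3 * cross_tol))
    \<le> Tstat n (resid_prod n \<omega>)"
proof -
  let ?e = "\<lambda>i. X i \<omega> - fP (Z i \<omega>)" and ?x = "\<lambda>i. Y i \<omega> - gP (Z i \<omega>)"
  let ?dF = "\<lambda>i. fP (Z i \<omega>) - fhat n (B \<omega>) (Z i \<omega>)" and ?dG = "\<lambda>i. gP (Z i \<omega>) - ghat n (B \<omega>) (Z i \<omega>)"
  let ?w = "\<lambda>i. what n (A \<omega>) (Z i \<omega>)"
  have resid: "(\<lambda>i. (?e i + ?dF i) * (?x i + ?dG i) * ?w i) = resid_prod n \<omega>"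
    by simp
  have le_of_not_less: "a \<le> c" if "\<not> c < \<bar>b\<bar>" "a = b" for a b c :: real
    using that by linarith
  from \<omega> have "\<omega> \<in> space Q" and not_exc: "\<omega> \<notin> exceptional_event n"
    by auto
  show ?thesis
    unfolding resid[symmetric]
  proof (rule Tstat_residual_product_ge[OF \<open>2 \<le> n\<close> weight_bound(2)])
    show "0 < hP_abs_mean / 4"
      using hP_abs_mean_pos by simp
    show "3 * weight_bound * sqrt cross_tol \<le> hP_abs_mean / 4"
      using hP_abs_mean_pos weight_bound(1) by (simp add: cross_tol_def)
    show "2 * (hP_abs_mean / 4) \<le> (\<Sum>i<n. ?w i * (?e i * ?x i)) / n"
      using not_exc \<open>\<omega> \<in> space Q\<close> by (simp add: exceptional_event_def)
    show "(\<Sum>i<n. (?e i)\<^sup>2 * (?dG i)\<^sup>2) / n \<le> cross_tol"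
      using not_exc \<open>\<omega> \<in> space Q\<close> by (intro le_of_not_less) (auto simp: exceptional_event_def)
    show "(\<Sum>i<n. (?x i)\<^sup>2 * (?dF i)\<^sup>2) / n \<le> cross_tol"
      using not_exc \<open>\<omega> \<in> space Q\<close> by (intro le_of_not_less) (auto simp: exceptional_event_def)
    show "(\<Sum>i<n. (?dF i)\<^sup>2) / n * ((\<Sum>i<n. (?dG i)\<^sup>2) / n) * n \<le> cross_tol"
      using not_exc \<open>\<omega> \<in> space Q\<close> by (intro le_of_not_less) (auto simp: exceptional_event_def)
    show "(?e 0 + ?dF 0) * (?x 0 + ?dG 0) * ?w 0 = (?e 1 + ?dF 1) * (?x 1 + ?dG 1) * ?w 1
        \<Longrightarrow> (?e 0 + ?dF 0) * (?x 0 + ?dG 0) * ?w 0 = 0"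
      using not_exc \<open>\<omega> \<in> space Q\<close> by (auto simp: exceptional_event_def)
  qed (rule K)
qed

lemma eventually_prob_Tstat_less:
  assumes "M > 0" "e > 0"
  shows "eventually (\<lambda>n. measure Q {\<omega> \<in> space Q. Tstat n (resid_prod n \<omega>) < M} < e) sequentially"
proof -
  let ?mean_sq = "\<lambda>n \<omega>. (\<Sum>i<n. ((X i \<omega> - fP (Z i \<omega>)) * (Y i \<omega> - gP (Z i \<omega>)))\<^sup>2) / n"
  have [measurable]: "exceptional_event n \<in> sets Q" for n
    unfolding exceptional_event_def by measurable
  define K where "K = 2 * sigma2 / e + 1"
  have "sigma2 \<ge> 0"
    by (simp add: sigma2_def)
  then have "K > 0" "sigma2 / K < e / 2"
    using \<open>e > 0\<close> by (simp_all add: K_def field_simps add_nonneg_pos)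
  define \<kappa> where "\<kappa> = (hP_abs_mean / 4) / sqrt (4 * weight_bound\<^sup>2 * (K + 3 * cross_tol))"
  have "\<kappa> > 0"
    using hP_abs_mean_pos weight_bound(1) \<open>K > 0\<close> cross_tol_pos by (simp add: \<kappa>_def)
  have large: "M \<le> sqrt n * \<kappa>" if "n \<ge> nat \<lceil>(M / \<kappa>)\<^sup>2\<rceil>" for n
  proof -
    have "(M / \<kappa>)\<^sup>2 \<le> n"
      using that real_nat_ceiling_ge[of "(M / \<kappa>)\<^sup>2"] by linarith
    then have "M / \<kappa> \<le> sqrt n"
      using \<open>M > 0\<close> \<open>\<kappa> > 0\<close> real_le_rsqrt by simp
    then show ?thesis
      using \<open>\<kappa> > 0\<close> by (simp add: field_simps)
  qed
  have "eventually (\<lambda>n. measure Q (exceptional_event n) < e / 2) sequentially"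
    using measure_exceptional_event_tendsto_zero \<open>e > 0\<close> by (intro order_tendstoD(2)) auto
  then show ?thesis
    using eventually_ge_at_top[of "max 2 (nat \<lceil>(M / \<kappa>)\<^sup>2\<rceil>)"]
  proof eventually_elim
    case (elim n)
    have "{\<omega> \<in> space Q. Tstat n (resid_prod n \<omega>) < M}
        \<subseteq> exceptional_event n \<union> {\<omega> \<in> space Q. K < ?mean_sq n \<omega>}"
      using Tstat_ge_outside_exceptional[of _ n K] large[of n] elim by (force simp: \<kappa>_def)
    then have "measure Q {\<omega> \<in> space Q. Tstat n (resid_prod n \<omega>) < M}
        \<le> measure Q (exceptional_event n) + measure Q {\<omega> \<in> space Q. K < ?mean_sq n \<omega>}"
      by (intro order_trans[OF Q.finite_measure_mono measure_Un_le]) (simp_all, measurable)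
    moreover have "measure Q {\<omega> \<in> space Q. K < ?mean_sq n \<omega>} \<le> sigma2 / K"
      using elim \<open>K > 0\<close> by (intro prob_mean_eps_xi_sq_gt_le) auto
    ultimately show ?case
      using elim \<open>sigma2 / K < e / 2\<close> by linarith
  qed
qed

theorem Tstat_tendsto_infinity:
  assumes "M > 0"
  shows "(\<lambda>n. measure Q {\<omega> \<in> space Q. M \<le> Tstat n (resid_prod n \<omega>)}) \<longlonglongrightarrow> 1"
proof -
  have "measure Q {\<omega> \<in> space Q. M \<le> Tstat n (resid_prod n \<omega>)}
      = 1 - measure Q {\<omega> \<in> space Q. Tstat n (resid_prod n \<omega>) < M}" for n
  proof -
    have "{\<omega> \<in> space Q. Tstat n (resid_prod n \<omega>) < M}
        = space Q - {\<omega> \<in> space Q. M \<le> Tstat n (resid_prod n \<omega>)}"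
      by auto
    moreover have "{\<omega> \<in> space Q. M \<le> Tstat n (resid_prod n \<omega>)} \<in> sets Q"
      unfolding Tstat_def by measurable
    ultimately show ?thesis
      by (simp add: Q.prob_compl)
  qed
  moreover have "(\<lambda>n. 1 - measure Q {\<omega> \<in> space Q. Tstat n (resid_prod n \<omega>) < M}) \<longlonglongrightarrow> 1 - 0"
    using eventually_prob_Tstat_less[OF \<open>M > 0\<close>]
    by (intro tendsto_intros measure_tendsto_zeroI)
  ultimately show ?thesis
    by simp
qed

end

theorem corollary1:
  fixes Q :: "'w measure"
    and P :: "(real \<times> real \<times> 'z::euclidean_space) measure"
    and X Y :: "nat \<Rightarrow> 'w \<Rightarrow> real" and Z :: "nat \<Rightarrow> 'w \<Rightarrow> 'z"
    and SA :: "'a measure" and A :: "'w \<Rightarrow> 'a"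
    and SB :: "'b measure" and B :: "'w \<Rightarrow> 'b"
    and what :: "nat \<Rightarrow> 'a \<Rightarrow> 'z \<Rightarrow> real"
    and fhat ghat :: "nat \<Rightarrow> 'b \<Rightarrow> 'z \<Rightarrow> real"
    and fP gP uP vP hP :: "'z \<Rightarrow> real"
  assumes Q: "prob_space Q"
    (* i.i.d. data with distribution P \<in> E_0 *)
    and D_meas: "\<And>i. (\<lambda>\<omega>. (X i \<omega>, Y i \<omega>, Z i \<omega>)) \<in> borel_measurable Q"
    and D_iid: "prob_space.indep_vars Q (\<lambda>_. borel) (\<lambda>i \<omega>. (X i \<omega>, Y i \<omega>, Z i \<omega>)) UNIV"
    and D_distr: "\<And>i. distr Q borel (\<lambda>\<omega>. (X i \<omega>, Y i \<omega>, Z i \<omega>)) = P"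
    and P_E0: "absolutely_continuous lborel P"
    (* f_P, g_P, u_P, v_P and E_P[eps xi | Z = z] *)
    and intX: "integrable P (\<lambda>x. fst x)" and intY: "integrable P (\<lambda>x. fst (snd x))"
    and fP: "is_cond_exp_fun P (\<lambda>x. snd (snd x)) (\<lambda>x. fst x) fP"
    and gP: "is_cond_exp_fun P (\<lambda>x. snd (snd x)) (\<lambda>x. fst (snd x)) gP"
    and uP: "is_nn_cond_exp_fun P (\<lambda>x. snd (snd x)) (\<lambda>x. (fst x - fP (snd (snd x)))\<^sup>2) uP"
    and vP: "is_nn_cond_exp_fun P (\<lambda>x. snd (snd x)) (\<lambda>x. (fst (snd x) - gP (snd (snd x)))\<^sup>2) vP"
    and hP: "is_cond_exp_fun P (\<lambda>x. snd (snd x))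
               (\<lambda>x. (fst x - fP (snd (snd x))) * (fst (snd x) - gP (snd (snd x)))) hP"
    and h_nonzero: "\<not> (AE x in P. hP (snd (snd x)) = 0)"
    (* weights estimated on A, regression functions on an auxiliary data set B;
       data, A and B mutually independent *)
    and A_meas: "A \<in> measurable Q SA" and B_meas: "B \<in> measurable Q SB"
    and indep: "prob_space.indep_sets Q
       (\<lambda>k::nat. if k = 0 then sets (vimage_algebra (space Q)
                      (\<lambda>\<omega> i. (X i \<omega>, Y i \<omega>, Z i \<omega>)) (PiM UNIV (\<lambda>_. borel)))
                 else if k = 1 then sets (vimage_algebra (space Q) A SA)
                 else sets (vimage_algebra (space Q) B SB)) {0, 1, 2}"
    and what_meas: "\<And>n. case_prod (what n) \<in> borel_measurable (SA \<Otimes>\<^sub>M borel)"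
    and fhat_meas: "\<And>n. case_prod (fhat n) \<in> borel_measurable (SB \<Otimes>\<^sub>M borel)"
    and ghat_meas: "\<And>n. case_prod (ghat n) \<in> borel_measurable (SB \<Otimes>\<^sub>M borel)"
    and what_bdd: "\<exists>C>0. \<forall>n a z. \<bar>what n a z\<bar> \<le> C"
    (* rate conditions *)
    and AfAg: "o_P Q
       (\<lambda>n \<omega>. ((\<Sum>i<n. (fP (Z i \<omega>) - fhat n (B \<omega>) (Z i \<omega>))\<^sup>2) / real n) *
               ((\<Sum>i<n. (gP (Z i \<omega>) - ghat n (B \<omega>) (Z i \<omega>))\<^sup>2) / real n))
       (\<lambda>n \<omega>. 1 / real n)"
    and Bf: "o_P Q (\<lambda>n \<omega>. (\<Sum>i<n. (fP (Z i \<omega>) - fhat n (B \<omega>) (Z i \<omega>))\<^sup>2 * vP (Z i \<omega>)) / real n)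
                   (\<lambda>n \<omega>. 1)"
    and Bg: "o_P Q (\<lambda>n \<omega>. (\<Sum>i<n. (gP (Z i \<omega>) - ghat n (B \<omega>) (Z i \<omega>))\<^sup>2 * uP (Z i \<omega>)) / real n)
                   (\<lambda>n \<omega>. 1)"
    and moment: "\<exists>\<eta>>0. (\<integral>\<^sup>+ x. ennreal (\<bar>(fst x - fP (snd (snd x))) * (fst (snd x) - gP (snd (snd x)))\<bar>
                                        powr (2 + \<eta>)) \<partial>P) < \<infinity>"
    (* conditional variance given A, bounded below uniformly in n *)
    and var_lb: "AE \<omega> in Q. \<exists>c>0. \<forall>n. c \<le> prob_space.variance P
                   (\<lambda>x. (fst x - fP (snd (snd x))) * (fst (snd x) - gP (snd (snd x)))
                        * what n (A \<omega>) (snd (snd x)))"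
    (* convergence of the weights to the sign of E[eps xi | Z = z] *)
    and what_lim: "AE \<omega> in Q. AE z in lborel. hP z \<noteq> 0 \<longrightarrow>
                   (\<lambda>n. what n (A \<omega>) z) \<longlonglongrightarrow> sgn (hP z)"
  shows "\<forall>M>0. (\<lambda>n. measure Q {\<omega> \<in> space Q.
            Tstat n (\<lambda>i. (X i \<omega> - fhat n (B \<omega>) (Z i \<omega>)) * (Y i \<omega> - ghat n (B \<omega>) (Z i \<omega>))
                          * what n (A \<omega>) (Z i \<omega>)) \<ge> M}) \<longlonglongrightarrow> 1"
proof -
  have "prob_space P"
    using prob_space.prob_space_distr[OF Q D_meas[of 0]] by (simp add: D_distr)
  moreover have "sets P = sets borel"
    by (metis D_distr sets_distr)
  ultimately interpret wgcm_sample P fP gP uP vP hP Q X Y Z SA A SB B what fhat ghat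
    by (intro wgcm_sample.intro wgcm_model.intro wgcm_model_axioms.intro wgcm_sample_axioms.intro)
      (assumption | rule assms)+
  show ?thesis
    using Tstat_tendsto_infinity by simp
qed

end
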